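(* Let $N=M\ell$ with $\ell$ prime, and let $\beta:=\beta_\ell(M)_*:\mathrm{Div}^0_{\mathrm{cusp}}(X_0(N))(\mathbf{Q})\to\mathrm{Div}^0_{\mathrm{cusp}}(X_0(M))(\mathbf{Q})$ be the push-forward along the degeneracy map. Then $$\mathrm{Div}^0_{\mathrm{cusp}}(X_0(M))(\mathbf{Q})\big/\beta\big(\mathrm{Div}^0_{\mathrm{cusp}}(X_0(N))(\mathbf{Q})\big)\simeq(\mathbf{Z}/\ell\mathbf{Z})^k$$ for some integer $k\ge0$. Moreover, if $\ell^4\nmid N$ then $k=0$, and consequently $\beta_\ell(M)_*(\mathscr{C}(N))=\mathscr{C}(M)$.
   Context: $\beta_\ell(M):X_0(M\ell)\to X_0(M)$ is the degeneracy map induced by $\tau\mapsto\ell\tau$ on the upper half-plane (modularly, $(E,C)\mapsto(E/C[\ell],C/C[\ell])$). $\mathrm{Div}^0_{\mathrm{cusp}}(X_0(N))(\mathbf{Q})$ denotes the group of degree-$0$ divisors on $X_0(N)$ supported on cusps and fixed by $\mathrm{Gal}(\overline{\mathbf{Q}}/\mathbf{Q})$. $\mathscr{C}(N)\subset J_0(N)$ is the group of linear equivalence classes of such divisors (the rational cuspidal divisor class group). *)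

theory Defs
  imports "HOL-Algebra.Algebra" "HOL-Number_Theory.Cong"
begin

text \<open>Cusps of X_0(N): Gamma_0(N)-orbits of P^1(Q), a cusp x/y being represented by a
coprime pair (x,y) of integers; a matrix (a b; c d) acts on the column vector (x,y).\<close>

definition cusp_reps :: "(int \<times> int) set" where
  "cusp_reps = {(x, y). coprime x y}"

definition gamma0_rel :: "nat \<Rightarrow> ((int \<times> int) \<times> (int \<times> int)) set" where
  "gamma0_rel N = {((x, y), (x', y')). coprime x y \<and> coprime x' y' \<and>
      (\<exists>a b c d. a * d - b * c = 1 \<and> int N dvd c \<and> x' = a * x + b * y \<and> y' = c * x + d * y)}"

definition cusps :: "nat \<Rightarrow> (int \<times> int) set set" where
  "cusps N = cusp_reps // gamma0_rel N"

text \<open>Galois action on cusps: sigma_u (zeta_N to zeta_N^u) sends the cusp x/y to x'/y with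
x' congruent to u x mod N (the conjugation by diag(u,1)).\<close>

definition galois_rel :: "nat \<Rightarrow> int \<Rightarrow> (int \<times> int) set \<Rightarrow> (int \<times> int) set \<Rightarrow> bool" where
  "galois_rel N u P Q \<longleftrightarrow> (\<exists>x y x'. (x, y) \<in> P \<and> (x', y) \<in> Q \<and> [x' = u * x] (mod int N))"

text \<open>Cuspidal divisors on X_0(N): integer-valued functions on the (finite) set of cusps.
Div^0_cusp(X_0(N))(Q): degree zero and Galois invariant.\<close>

definition rat_cusp_div0 :: "nat \<Rightarrow> ((int \<times> int) set \<Rightarrow> int) set" where
  "rat_cusp_div0 N = {D. (\<forall>P. P \<notin> cusps N \<longrightarrow> D P = 0) \<and> (\<Sum>P\<in>cusps N. D P) = 0 \<and>
      (\<forall>u. coprime u (int N) \<longrightarrow> (\<forall>P\<in>cusps N. \<forall>Q\<in>cusps N. galois_rel N u P Q \<longrightarrow> D P = D Q))}"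

definition div0_group :: "nat \<Rightarrow> ((int \<times> int) set \<Rightarrow> int) monoid" where
  "div0_group N = \<lparr>carrier = rat_cusp_div0 N, monoid.mult = (\<lambda>D E P. D P + E P), one = (\<lambda>_. 0)\<rparr>"

text \<open>Degeneracy map beta_l(M): X_0(Ml) \<rightarrow> X_0(M), tau \<mapsto> l tau, on cusps: x/y \<mapsto> (l x)/y.\<close>

definition beta_cusp :: "nat \<Rightarrow> nat \<Rightarrow> (int \<times> int) set \<Rightarrow> (int \<times> int) set" where
  "beta_cusp l M P = (let (x, y) = (SOME p. p \<in> P); g = gcd (int l * x) y
                      in gamma0_rel M `` {(int l * x div g, y div g)})"

definition beta_push :: "nat \<Rightarrow> nat \<Rightarrow> ((int \<times> int) set \<Rightarrow> int) \<Rightarrow> ((int \<times> int) set \<Rightarrow> int)" where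
  "beta_push l M D Q = (if Q \<in> cusps M
      then (\<Sum>P\<in>{P \<in> cusps (M * l). beta_cusp l M P = Q}. D P) else 0)"

end

theory Submission
  imports Defs
begin

text \<open>A divisor \<open>D\<close> on \<open>X\<^sub>0(M)\<close> is pulled back to the divisor
  on \<open>X\<^sub>0(M l)\<close> whose value at \<open>P\<close> is \<open>D(\<beta> P)\<close> times an integral weight depending only on
  \<open>gcd(y, M l)\<close> for \<open>P = x/y\<close>. This is rational and of degree zero whenever the weights over each
  fibre of \<open>\<beta>\<close> add up to a constant \<open>t\<close>, and then pushes forward to \<open>t D\<close>. The classical
  invariants of cusps \<open>x/y\<close> (namely \<open>g = gcd(y, N)\<close>, and \<open>x (y/g)\<close> modulo \<open>gcd(g, N/g)\<close>) determine the
  fibres well enough to reach \<open>t = l\<close> always, and \<open>t = 1\<close> when \<open>l\<^sup>3\<close> does not divide \<open>M\<close>.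
  So the cokernel is killed by \<open>l\<close>; it is finite because it is a quotient of the divisors taken
  modulo \<open>l\<close>, hence an \<open>\<bbbF>\<^sub>l\<close>-vector space, and it vanishes in the second case.\<close>

lemma coprime_if_bezout: "s * a + t * b = (1::int) \<Longrightarrow> coprime a b"
  by (rule coprimeI) (metis dvd_add dvd_mult)

lemma coprime_unimodular_image:
  fixes x y a b c d :: int
  assumes "a * d - b * c = 1" "coprime x y"
  shows "coprime (a * x + b * y) (c * x + d * y)"
proof (rule coprimeI)
  fix k assume k1: "k dvd a * x + b * y" and k2: "k dvd c * x + d * y"
  have "d * (a * x + b * y) - b * (c * x + d * y) = (a * d - b * c) * x"
    and "a * (c * x + d * y) - c * (a * x + b * y) = (a * d - b * c) * y"
    by (simp_all add: algebra_simps)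
  then have "k dvd x" "k dvd y"
    using assms(1) k1 k2 by (metis dvd_diff dvd_mult mult_1)+
  then show "is_unit k" using assms(2) coprime_common_divisor by blast
qed

lemma exists_coprime_translate:
  fixes a b n :: int
  assumes "n \<noteq> 0" "coprime a b"
  shows "\<exists>k. coprime (a + k * b) n"
proof -
  define S where "S = {p \<in> prime_factors n. \<not> p dvd a}"
  define k where "k = \<Prod>S"
  have finS: "finite S" unfolding S_def by auto
  have "coprime (a + k * b) n"
  proof (rule ccontr)
    assume "\<not> coprime (a + k * b) n"
    then obtain p where "p dvd gcd (a + k * b) n" "Factorial_Ring.prime p"
      using assms(1) prime_divisor_exists[of "gcd (a + k * b) n"] coprime_iff_gcd_eq_1
      by (metis gcd_eq_0_iff is_unit_gcd)
    then have p: "Factorial_Ring.prime p" "p dvd a + k * b" "p dvd n" by auto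
    show False
    proof (cases "p dvd a")
      case True
      have "\<not> p dvd b" using True assms(2) p(1) coprime_common_divisor not_prime_unit by blast
      moreover have "\<not> p dvd k"
      proof
        assume "p dvd k"
        then obtain q where q: "q \<in> S" "p dvd q"
          unfolding k_def using prime_dvd_prod_iff[OF finS p(1)] by auto
        then have "p = q" using p(1) primes_dvd_imp_eq unfolding S_def by auto
        then show False using q(1) True unfolding S_def by auto
      qed
      ultimately have "\<not> p dvd k * b" using p(1) prime_dvd_mult_iff by blast
      then show False using p(2) True by (metis dvd_add_right_iff)
    next
      case False
      moreover have "p > 0" using p(1) prime_gt_0_int by blast
      ultimately have "normalize p \<in> S"
        unfolding S_def using p assms(1) by (simp add: in_prime_factors_iff)
      then have "normalize p dvd k" unfolding k_def using finS by (rule dvd_prodI[rotated])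
      then have "p dvd k * b" by simp
      then show False using p(2) False by (metis dvd_add_left_iff)
    qed
  qed
  then show ?thesis by blast
qed

lemma coprime_translate_mult:
  fixes x y b L :: int
  assumes "coprime x y" "L dvd y"
  shows "coprime (x + b * y) (L * y)"
proof -
  have "coprime (x + b * y) y"
    using assms(1) gcd_add_mult[of y b x] by (simp add: coprime_iff_gcd_eq_1 gcd.commute add.commute)
  moreover have "coprime (x + b * y) L"
    using coprime_divisors[OF dvd_refl assms(2) calculation] .
  ultimately show ?thesis by simp
qed

lemma power_multiplicity_exact:
  assumes M: "M > 0" and l: "Factorial_Ring.prime (l::nat)"
  shows "l ^ multiplicity l M dvd M" "\<not> l ^ (multiplicity l M + 1) dvd M"
  using M l not_prime_unit power_dvd_iff_le_multiplicity[of M l "multiplicity l M + 1"]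
  by (auto simp: multiplicity_dvd)

lemma finite_image_if_factors:
  assumes fin: "finite (g ` A)" and eq: "\<And>x y. x \<in> A \<Longrightarrow> y \<in> A \<Longrightarrow> g x = g y \<Longrightarrow> f x = f y"
  shows "finite (f ` A)"
proof (rule finite_subset)
  show "f ` A \<subseteq> (\<lambda>r. f (inv_into A g r)) ` g ` A"
  proof
    fix z assume "z \<in> f ` A"
    then obtain x where x: "x \<in> A" "z = f x" by blast
    have "f (inv_into A g (g x)) = f x"
      using x(1) by (intro eq inv_into_into f_inv_into_f) auto
    then show "z \<in> (\<lambda>r. f (inv_into A g r)) ` g ` A" using x by force
  qed
qed (use fin in simp)

section \<open>Finite commutative groups of prime exponent\<close>

locale prime_exponent_group = comm_group +
  fixes p :: nat
  assumes prime_p: "Factorial_Ring.prime p"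
    and pow_p_eq_one: "x \<in> carrier G \<Longrightarrow> x [^] p = \<one>"
begin

abbreviation Zp :: "nat \<Rightarrow> (nat \<Rightarrow> int) monoid" where
  "Zp k \<equiv> product_group {..<k} (\<lambda>_. integer_mod_group p)"

lemma p_pos: "p > 0"
  using prime_p prime_gt_0_nat by blast

lemma carrier_Zp: "carrier (Zp k) = (\<Pi>\<^sub>E i\<in>{..<k}. {0..<int p})"
  using p_pos by (simp add: carrier_integer_mod_group)

lemma card_carrier_Zp: "card (carrier (Zp k)) = p ^ k"
  unfolding carrier_Zp by (simp add: card_PiE)

lemma int_pow_mod_p:
  assumes x: "x \<in> carrier G"
  shows "x [^] (i mod int p) = x [^] (i::int)"
proof -
  have "int (ord x) dvd int p" using pow_eq_id[OF x] pow_p_eq_one[OF x] by simp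
  also have "int p dvd i - i mod int p" by (simp add: minus_mod_eq_mult_div)
  finally show ?thesis using int_pow_eq[OF x] by simp
qed

definition combination :: "(nat \<Rightarrow> 'a) \<Rightarrow> nat \<Rightarrow> (nat \<Rightarrow> int) \<Rightarrow> 'a" where
  "combination g k c = finprod G (\<lambda>i. g i [^] c i) {..<k}"

lemma combination_closed: "g \<in> {..<k} \<rightarrow> carrier G \<Longrightarrow> combination g k c \<in> carrier G"
  unfolding combination_def by (auto intro: finprod_closed)

lemma combination_cong:
  "g' \<in> {..<k} \<rightarrow> carrier G \<Longrightarrow> (\<And>i. i < k \<Longrightarrow> g i = g' i) \<Longrightarrow> (\<And>i. i < k \<Longrightarrow> c i = c' i) \<Longrightarrow>
    combination g k c = combination g' k c'"
  unfolding combination_def by (intro finprod_cong) (auto simp: Pi_iff)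

lemma combination_Suc:
  assumes "g \<in> {..<Suc k} \<rightarrow> carrier G"
  shows "combination g (Suc k) c = combination g k c \<otimes> g k [^] c k"
proof -
  have "(\<lambda>i. g i [^] c i) \<in> {..<k} \<rightarrow> carrier G" "g k [^] c k \<in> carrier G" using assms by auto
  then show ?thesis unfolding combination_def lessThan_Suc by (simp add: m_comm)
qed

lemma combination_hom:
  assumes g: "g \<in> {..<k} \<rightarrow> carrier G"
  shows "combination g k \<in> hom (Zp k) G"
proof (rule homI)
  fix c assume "c \<in> carrier (Zp k)"
  show "combination g k c \<in> carrier G" using combination_closed[OF g] .
next
  fix c c' assume "c \<in> carrier (Zp k)" "c' \<in> carrier (Zp k)"
  have "combination g k (c \<otimes>\<^bsub>Zp k\<^esub> c') = finprod G (\<lambda>i. g i [^] ((c i + c' i) mod int p)) {..<k}"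
    unfolding combination_def using g by (intro finprod_cong) (auto simp: Pi_iff)
  also have "\<dots> = finprod G (\<lambda>i. g i [^] c i \<otimes> g i [^] c' i) {..<k}"
    using g by (intro finprod_cong) (auto simp: Pi_iff int_pow_mod_p int_pow_mult simp_implies_def)
  also have "\<dots> = combination g k c \<otimes> combination g k c'"
    unfolding combination_def using g by (intro finprod_multf) auto
  finally show "combination g k (c \<otimes>\<^bsub>Zp k\<^esub> c') = combination g k c \<otimes> combination g k c'" .
qed

lemma combination_group_hom: "g \<in> {..<k} \<rightarrow> carrier G \<Longrightarrow> group_hom (Zp k) G (combination g k)"
  using combination_hom by (simp add: group_hom_def group_hom_axioms_def is_group)

lemma mem_subgroup_if_int_pow_mem:
  assumes H: "subgroup H G" and x: "x \<in> carrier G" and e: "x [^] (e::int) \<in> H"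
    and cp: "coprime e (int p)"
  shows "x \<in> H"
proof -
  obtain f where f: "[e * f = 1] (mod int p)" using cong_solve_coprime_int[OF cp] by blast
  have "(x [^] e) [^] f = x [^] (e * f mod int p)" using x by (simp add: int_pow_pow int_pow_mod_p)
  also have "e * f mod int p = 1" using f prime_gt_1_nat[OF prime_p] unfolding cong_def by simp
  finally have "(x [^] e) [^] f = x" using x by simp
  then show ?thesis using subgroup_int_pow_closed[OF H e, of f] by simp
qed

lemma combination_extend_eq_one:
  assumes g: "g \<in> {..<k} \<rightarrow> carrier G" and inj: "inj_on (combination g k) (carrier (Zp k))"
    and x: "x \<in> carrier G" and nx: "x \<notin> combination g k ` carrier (Zp k)"
    and c: "c \<in> carrier (Zp (Suc k))" and one: "combination (g(k := x)) (Suc k) c = \<one>"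
  shows "c = \<one>\<^bsub>Zp (Suc k)\<^esub>"
proof -
  define r where "r = restrict c {..<k}"
  have r: "r \<in> carrier (Zp k)" using c unfolding r_def carrier_Zp by (auto simp: PiE_iff)
  have ck: "0 \<le> c k" "c k < int p" using c unfolding carrier_Zp by (auto simp: PiE_iff)
  have "g(k := x) \<in> {..<Suc k} \<rightarrow> carrier G" using g x by (auto simp: Pi_iff less_Suc_eq)
  moreover have "combination (g(k := x)) k c = combination g k r"
    unfolding r_def using g by (intro combination_cong) auto
  ultimately have rx: "combination g k r \<otimes> x [^] c k = \<one>"
    using one combination_Suc by simp
  have "c k = 0"
  proof (rule ccontr)
    assume "c k \<noteq> 0"
    then have "\<not> int p dvd c k" using ck by (auto dest: zdvd_imp_le)
    then have "coprime (c k) (int p)"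
      using prime_p prime_imp_coprime[of "int p" "c k"] by (simp add: coprime_commute)
    moreover have span: "subgroup (combination g k ` carrier (Zp k)) G"
      using group_hom.img_is_subgroup[OF combination_group_hom[OF g]] .
    moreover have "x [^] c k = inv (combination g k r)"
      using rx x r combination_closed[OF g] by (metis int_pow_closed inv_equality m_comm)
    then have "x [^] c k \<in> combination g k ` carrier (Zp k)"
      using span r by (simp add: subgroup.m_inv_closed)
    ultimately show False using mem_subgroup_if_int_pow_mem x nx by blast
  qed
  then have "combination g k r = \<one>\<^bsub>G\<^esub>" using rx combination_closed[OF g] by simp
  then have "r = \<one>\<^bsub>Zp k\<^esub>"
    using inj r group_hom.hom_one[OF combination_group_hom[OF g]]
    by (metis inj_onD group.is_monoid monoid.one_closed product_group group_integer_mod_group)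
  then show ?thesis using c \<open>c k = 0\<close> unfolding r_def
    by (auto simp: fun_eq_iff PiE_iff extensional_def restrict_def less_Suc_eq split: if_splits)
qed

lemma inj_on_combination_extend:
  assumes g: "g \<in> {..<k} \<rightarrow> carrier G" and inj: "inj_on (combination g k) (carrier (Zp k))"
    and x: "x \<in> carrier G" and nx: "x \<notin> combination g k ` carrier (Zp k)"
  shows "inj_on (combination (g(k := x)) (Suc k)) (carrier (Zp (Suc k)))"
proof -
  have "g(k := x) \<in> {..<Suc k} \<rightarrow> carrier G" using g x by (auto simp: Pi_iff less_Suc_eq)
  note hom = combination_group_hom[OF this]
  have "kernel (Zp (Suc k)) G (combination (g(k := x)) (Suc k)) = {\<one>\<^bsub>Zp (Suc k)\<^esub>}"
    using combination_extend_eq_one[OF g inj x nx] subgroup.one_closed[OF group_hom.subgroup_kernel[OF hom]]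
    unfolding kernel_def by blast
  then show ?thesis using group_hom.inj_iff_trivial_ker[OF hom] by simp
qed

theorem iso_product_integer_mod_group:
  assumes fin: "finite (carrier G)"
  shows "\<exists>k. G \<cong> Zp k"
proof -
  define indep where
    "indep k \<longleftrightarrow> (\<exists>g. g \<in> {..<k} \<rightarrow> carrier G \<and> inj_on (combination g k) (carrier (Zp k)))" for k
  have bound: "k \<le> card (carrier G)" if "indep k" for k
  proof -
    from that obtain g where g: "g \<in> {..<k} \<rightarrow> carrier G" "inj_on (combination g k) (carrier (Zp k))"
      unfolding indep_def by blast
    have "p ^ k = card (combination g k ` carrier (Zp k))"
      using card_image[OF g(2)] card_carrier_Zp by simp
    also have "\<dots> \<le> card (carrier G)"
      using fin combination_closed[OF g(1)] by (intro card_mono) auto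
    finally have "p ^ k \<le> card (carrier G)" .
    moreover have "k < 2 ^ k" by (rule less_exp)
    moreover have "2 ^ k \<le> p ^ k" using prime_ge_2_nat[OF prime_p] by (rule power_mono) simp
    ultimately show ?thesis by linarith
  qed
  have "indep 0" unfolding indep_def by (auto simp: inj_on_def)
  define K where "K = Greatest indep"
  have "indep K" unfolding K_def using GreatestI_nat[of indep 0, OF \<open>indep 0\<close> bound] .
  then obtain g where g: "g \<in> {..<K} \<rightarrow> carrier G" "inj_on (combination g K) (carrier (Zp K))"
    unfolding indep_def by blast
  have "combination g K ` carrier (Zp K) = carrier G"
  proof (rule ccontr)
    assume "combination g K ` carrier (Zp K) \<noteq> carrier G"
    then obtain x where x: "x \<in> carrier G" "x \<notin> combination g K ` carrier (Zp K)"
      using combination_closed[OF g(1)] by blast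
    have "g(K := x) \<in> {..<Suc K} \<rightarrow> carrier G" using g(1) x(1) by (auto simp: Pi_iff less_Suc_eq)
    then have "indep (Suc K)" unfolding indep_def using inj_on_combination_extend[OF g x] by blast
    then show False using Greatest_le_nat[of indep "Suc K", OF _ bound] unfolding K_def by simp
  qed
  then have "combination g K \<in> iso (Zp K) G"
    using g combination_hom by (auto simp: iso_def bij_betw_def)
  then have "Zp K \<cong> G" by (rule is_isoI)
  moreover have "group (Zp K)" by simp
  ultimately have "G \<cong> Zp K" using group.iso_sym by blast
  then show ?thesis ..
qed

end

lemma card_FactGroup_carrier:
  assumes "group G"
  shows "card (carrier (G Mod carrier G)) = 1"
proof -
  have "carrier (G Mod carrier G) = (\<lambda>x. carrier G #>\<^bsub>G\<^esub> x) ` carrier G"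
    by (rule carrier_FactGroup)
  also have "\<dots> = (\<lambda>x. carrier G) ` carrier G"
    using subgroup.rcos_const[OF group.subgroup_self[OF assms] assms] by simp
  also have "\<dots> = {carrier G}" using group.is_monoid[OF assms] monoid.one_closed by blast
  finally show ?thesis by simp
qed

section \<open>Cusps of \<open>X\<^sub>0(N)\<close> and their invariants\<close>

definition in_Gamma0 :: "nat \<Rightarrow> int \<Rightarrow> int \<Rightarrow> int \<Rightarrow> int \<Rightarrow> bool" where
  "in_Gamma0 N a b c d \<longleftrightarrow> a * d - b * c = 1 \<and> int N dvd c"

lemma gamma0_relI:
  assumes "coprime x y" "in_Gamma0 N a b c d" "x' = a * x + b * y" "y' = c * x + d * y"
  shows "((x, y), (x', y')) \<in> gamma0_rel N"
  using assms coprime_unimodular_image unfolding gamma0_rel_def in_Gamma0_def by blast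

lemma gamma0_relE:
  assumes "((x, y), (x', y')) \<in> gamma0_rel N"
  obtains a b c d where "in_Gamma0 N a b c d" "x' = a * x + b * y" "y' = c * x + d * y"
    "coprime x y" "coprime x' y'"
  using assms unfolding gamma0_rel_def in_Gamma0_def by blast

lemma gamma0_rel_coprime:
  "((x, y), (x', y')) \<in> gamma0_rel N \<Longrightarrow> coprime x y \<and> coprime x' y'"
  unfolding gamma0_rel_def by auto

lemma gamma0_rel_translate: "coprime x y \<Longrightarrow> ((x, y), (x + b * y, y)) \<in> gamma0_rel N"
  by (rule gamma0_relI[where a=1 and b=b and c=0 and d=1]) (auto simp: in_Gamma0_def)

lemma gamma0_rel_shear: "coprime x y \<Longrightarrow> ((x, y), (x, int N * c * x + y)) \<in> gamma0_rel N"
  by (rule gamma0_relI[where a=1 and b=0 and c="int N * c" and d=1]) (auto simp: in_Gamma0_def)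

lemma gamma0_rel_refl: "coprime x y \<Longrightarrow> ((x, y), (x, y)) \<in> gamma0_rel N"
  using gamma0_rel_translate[of x y 0] by simp

lemma gamma0_rel_sym:
  assumes "((x, y), (x', y')) \<in> gamma0_rel N"
  shows "((x', y'), (x, y)) \<in> gamma0_rel N"
proof -
  obtain a b c d where g: "in_Gamma0 N a b c d" "x' = a * x + b * y" "y' = c * x + d * y"
    "coprime x' y'" using gamma0_relE[OF assms] by metis
  have det: "a * d - b * c = 1" using g(1) by (simp add: in_Gamma0_def)
  show ?thesis
  proof (rule gamma0_relI[where a=d and b="-b" and c="-c" and d=a])
    show "in_Gamma0 N d (- b) (- c) a" using g(1) by (auto simp: in_Gamma0_def algebra_simps)
    have "d * x' + - b * y' = (a * d - b * c) * x" "- c * x' + a * y' = (a * d - b * c) * y"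
      using g(2,3) by (simp_all add: algebra_simps)
    then show "x = d * x' + - b * y'" "y = - c * x' + a * y'" using det by simp_all
  qed fact
qed

lemma gamma0_rel_trans:
  assumes "((x, y), (x', y')) \<in> gamma0_rel N" "((x', y'), (x'', y'')) \<in> gamma0_rel N"
  shows "((x, y), (x'', y'')) \<in> gamma0_rel N"
proof -
  obtain a b c d where g: "in_Gamma0 N a b c d" "x' = a * x + b * y" "y' = c * x + d * y"
    "coprime x y" using gamma0_relE[OF assms(1)] by metis
  obtain a' b' c' d' where g': "in_Gamma0 N a' b' c' d'" "x'' = a' * x' + b' * y'"
    "y'' = c' * x' + d' * y'" using gamma0_relE[OF assms(2)] by metis
  have "(a' * a + b' * c) * (c' * b + d' * d) - (a' * b + b' * d) * (c' * a + d' * c)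
      = (a * d - b * c) * (a' * d' - b' * c')" by (simp add: algebra_simps)
  then have "in_Gamma0 N (a' * a + b' * c) (a' * b + b' * d) (c' * a + d' * c) (c' * b + d' * d)"
    using g(1) g'(1) by (simp add: in_Gamma0_def)
  then show ?thesis
    by (rule gamma0_relI[OF g(4)]) (use g g' in \<open>simp_all add: algebra_simps\<close>)
qed

lemma equiv_gamma0_rel: "equiv cusp_reps (gamma0_rel N)"
proof (rule equivI)
  show "refl_on cusp_reps (gamma0_rel N)"
    unfolding refl_on_def cusp_reps_def using gamma0_rel_refl by (auto simp: gamma0_rel_def)
  show "sym (gamma0_rel N)" unfolding sym_def using gamma0_rel_sym by auto
  show "trans (gamma0_rel N)" unfolding trans_def using gamma0_rel_trans by auto
  show "gamma0_rel N \<subseteq> cusp_reps \<times> cusp_reps"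
    unfolding gamma0_rel_def cusp_reps_def by auto
qed

lemma cusp_eq_class: "P \<in> cusps N \<Longrightarrow> p \<in> P \<Longrightarrow> P = gamma0_rel N `` {p}"
  unfolding cusps_def by (metis equiv_class_eq equiv_gamma0_rel quotientE Image_singleton_iff)

lemma cusp_nonempty: "P \<in> cusps N \<Longrightarrow> \<exists>p. p \<in> P"
  unfolding cusps_def using equiv_gamma0_rel in_quotient_imp_non_empty by blast

lemma cusp_gamma0_rel: "P \<in> cusps N \<Longrightarrow> p \<in> P \<Longrightarrow> q \<in> P \<Longrightarrow> (p, q) \<in> gamma0_rel N"
  unfolding cusps_def using in_quotient_imp_in_rel[OF equiv_gamma0_rel] by blast

lemma cusp_coprime: "P \<in> cusps N \<Longrightarrow> (x, y) \<in> P \<Longrightarrow> coprime x y"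
  using cusp_gamma0_rel gamma0_rel_coprime by blast

lemma some_in_cusp: "P \<in> cusps N \<Longrightarrow> (SOME p. p \<in> P) \<in> P"
  using cusp_nonempty by (meson someI_ex)

lemma class_in_cusps: "coprime x y \<Longrightarrow> gamma0_rel N `` {(x, y)} \<in> cusps N"
  unfolding cusps_def by (rule quotientI) (simp add: cusp_reps_def)

lemma in_own_class: "coprime x y \<Longrightarrow> (x, y) \<in> gamma0_rel N `` {(x, y)}"
  using gamma0_rel_refl by auto

lemma class_eq_iff:
  "coprime x y \<Longrightarrow> coprime x' y' \<Longrightarrow>
    gamma0_rel N `` {(x, y)} = gamma0_rel N `` {(x', y')} \<longleftrightarrow> ((x, y), (x', y')) \<in> gamma0_rel N"
  using equiv_gamma0_rel by (intro eq_equiv_class_iff) (auto simp: cusp_reps_def)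

lemma cusps_eqI:
  assumes "P \<in> cusps N" "Q \<in> cusps N" "p \<in> P" "q \<in> Q" "(p, q) \<in> gamma0_rel N"
  shows "P = Q"
  using assms cusp_eq_class equiv_class_eq[OF equiv_gamma0_rel assms(5)] by metis

lemma gamma0_rel_to_gcd_rep:
  assumes cp: "coprime x y" and N: "N > 0"
  shows "\<exists>x'. ((x, y), (x', gcd y (int N))) \<in> gamma0_rel N"
proof -
  define g where "g = gcd y (int N)"
  have gpos: "g > 0" using N unfolding g_def by simp
  have gx: "gcd (int N * x) y = g"
    using cp unfolding g_def by (simp add: gcd_mult_right_right_cancel coprime_commute gcd.commute)
  obtain s t where st: "s * (int N * x) + t * y = g" using bezout_int[of "int N * x" y] gx by auto
  define A where "A = int N * x div g"
  define B where "B = y div g"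
  have Ag: "int N * x = A * g" and Bg: "y = B * g"
    unfolding A_def B_def by (metis gx gcd_dvd1 gcd_dvd2 dvd_div_mult_self)+
  have st1: "s * A + t * B = 1"
  proof -
    have "(s * A + t * B) * g = 1 * g" using st Ag Bg by (simp add: algebra_simps)
    then show ?thesis using gpos by simp
  qed
  have "coprime t A" using coprime_if_bezout[of B t s A] st1 by (simp add: algebra_simps)
  then obtain k where k: "coprime (t + k * A) (int N)"
    using exists_coprime_translate[of "int N" t A] N by auto
  \<comment> \<open>the bottom row \<open>(N c0, d)\<close> of the matrix is chosen with \<open>c0 A + d B = 1\<close> and \<open>d\<close> prime to \<open>N\<close>\<close>
  define d where "d = t + k * A"
  define c0 where "c0 = s - k * B"
  have e1: "c0 * A + d * B = 1" unfolding c0_def d_def using st1 by (simp add: algebra_simps)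
  have "coprime d c0" using coprime_if_bezout[of B d A c0] e1 by (simp add: algebra_simps)
  then have "coprime d (int N * c0)" using k unfolding d_def[symmetric] by simp
  then obtain a b' where ab: "a * d + b' * (int N * c0) = 1"
    using bezout_int[of d "int N * c0"] by (auto simp: coprime_iff_gcd_eq_1)
  have G: "in_Gamma0 N a (- b') (int N * c0) d" unfolding in_Gamma0_def using ab by (simp add: algebra_simps)
  have "int N * c0 * x + d * y = (c0 * A + d * B) * g" using Ag Bg by (simp add: algebra_simps)
  then have "((x, y), (a * x + - b' * y, g)) \<in> gamma0_rel N"
    using e1 by (intro gamma0_relI[OF cp G]) simp_all
  then show ?thesis unfolding g_def by blast
qed

lemma gamma0_rel_gcd_eq:
  assumes "((x, y), (x', y')) \<in> gamma0_rel N"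
  shows "gcd y' (int N) = gcd y (int N)"
proof -
  obtain a b c d where g: "in_Gamma0 N a b c d" "y' = c * x + d * y"
    using gamma0_relE[OF assms] by metis
  obtain c0 where c: "c = int N * c0" using g(1) unfolding in_Gamma0_def by auto
  have "coprime (int N) d"
    using coprime_if_bezout[of "- b * c0" "int N" a d] g(1) c by (simp add: in_Gamma0_def algebra_simps)
  moreover have "gcd y' (int N) = gcd (d * y + (c0 * x) * int N) (int N)"
    using g(2) c by (simp add: algebra_simps)
  moreover have "\<dots> = gcd (d * y) (int N)"
    using gcd_add_mult[of "int N" "c0 * x" "d * y"] by (simp add: gcd.commute add.commute)
  ultimately show ?thesis by (simp add: gcd_mult_left_left_cancel)
qed

text \<open>With \<open>g = gcd y N\<close>, the residue of \<open>x (y / g)\<close> modulo \<open>gcd g (N / g)\<close> is the second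
  invariant of the cusp \<open>x/y\<close>.\<close>

lemma gamma0_rel_cong:
  assumes r: "((x, y), (x', y')) \<in> gamma0_rel N" and N: "N > 0"
    and g: "g = gcd y (int N)" and m: "m dvd g" "m dvd int N div g"
  shows "[x' * (y' div g) = x * (y div g)] (mod m)"
proof -
  obtain a b c d where G: "in_Gamma0 N a b c d" "x' = a * x + b * y" "y' = c * x + d * y"
    using gamma0_relE[OF r] by metis
  have gpos: "g > 0" using N g by simp
  obtain c0 where c: "c = int N * c0" using G(1) unfolding in_Gamma0_def by auto
  define n where "n = int N div g"
  define Y where "Y = y div g"
  have Nn: "int N = g * n" and yY: "y = g * Y" unfolding n_def Y_def g by simp_all
  have det: "a * d - b * c = 1" using G(1) unfolding in_Gamma0_def by auto
  have c': "c = g * n * c0" using c Nn by simp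
  have y'Y: "y' = g * (n * c0 * x + d * Y)" using G(3) c' yY by (simp add: algebra_simps)
  have "x' * (n * c0 * x + d * Y) - x * Y
      = (a * d - b * c - 1) * (x * Y) + g * (b * n * c0 * x * Y + b * d * Y ^ 2)
        + n * (a * c0 * x ^ 2 + b * g * c0 * x * Y)"
    unfolding G(2) c' yY by (simp add: algebra_simps power2_eq_square)
  then have "x' * (y' div g) - x * (y div g)
      = g * (b * n * c0 * x * Y + b * d * Y ^ 2) + n * (a * c0 * x ^ 2 + b * g * c0 * x * Y)"
    using det y'Y gpos unfolding Y_def by simp
  then have "m dvd x' * (y' div g) - x * (y div g)"
    using m unfolding n_def[symmetric] by (simp add: dvd_add dvd_mult2)
  then show ?thesis by (simp add: cong_iff_dvd_diff)
qed

lemma gamma0_rel_same_denominator: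
  fixes g n x1 x2 :: int
  assumes Nn: "int N = g * n" and c1: "coprime x1 g" and c2: "coprime x2 g"
    and cg: "[x1 = x2] (mod gcd g n)"
  shows "((x1, g), (x2, g)) \<in> gamma0_rel N"
proof -
  have "coprime (x1 * x2) g" using c1 c2 by simp
  then obtain w v where wv: "w * (x1 * x2) + v * g = 1"
    using bezout_int[of "x1 * x2" g] by (auto simp: coprime_iff_gcd_eq_1)
  obtain s t where st: "s * n + t * g = gcd g n" using bezout_int[of n g] by (auto simp: gcd.commute)
  obtain e where e: "x2 - x1 = gcd g n * e" using cg by (metis cong_iff_dvd_diff cong_sym dvdE)
  define c0 where "c0 = s * e * w"
  define d where "d = 1 - n * c0 * x1"
  define b where "b = e * (n * s * v + t)"
  define a where "a = 1 + n * c0 * x2"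
  have bg: "b * g = d * x2 - x1"
  proof -
    have "d * x2 - x1 = (x2 - x1) - n * s * e * (w * (x1 * x2))"
      unfolding d_def c0_def by (simp add: algebra_simps)
    also have "\<dots> = (s * n + t * g) * e - n * s * e * (1 - v * g)"
      using wv e st by (simp add: eq_diff_eq)
    also have "\<dots> = b * g" unfolding b_def by (simp add: algebra_simps)
    finally show ?thesis by simp
  qed
  have "a * d - b * (g * n * c0) = a * d - (b * g) * n * c0" by (simp add: algebra_simps)
  also have "\<dots> = 1" unfolding bg a_def d_def by (simp add: algebra_simps)
  finally have "in_Gamma0 N a b (g * n * c0) d" unfolding in_Gamma0_def using Nn by simp
  then show ?thesis
    by (rule gamma0_relI[OF c1]) (use bg in \<open>simp_all add: a_def d_def algebra_simps\<close>)
qed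

lemma gamma0_rel_if_invariants:
  assumes N: "N > 0" and cp1: "coprime x1 y1" and cp2: "coprime x2 y2"
    and gg: "gcd y2 (int N) = gcd y1 (int N)"
    and cg: "[x1 * (y1 div gcd y1 (int N)) = x2 * (y2 div gcd y1 (int N))]
               (mod gcd (gcd y1 (int N)) (int N div gcd y1 (int N)))"
  shows "((x1, y1), (x2, y2)) \<in> gamma0_rel N"
proof -
  define g where "g = gcd y1 (int N)"
  define h where "h = gcd g (int N div g)"
  have gpos: "g > 0" using N unfolding g_def by simp
  obtain q1 where r1: "((x1, y1), (q1, g)) \<in> gamma0_rel N"
    using gamma0_rel_to_gcd_rep[OF cp1 N] unfolding g_def by blast
  obtain q2 where r2: "((x2, y2), (q2, g)) \<in> gamma0_rel N"
    using gamma0_rel_to_gcd_rep[OF cp2 N] gg unfolding g_def by auto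
  have hg: "h dvd g" "h dvd int N div g" unfolding h_def by auto
  have "[q1 * (g div g) = x1 * (y1 div g)] (mod h)"
    by (rule gamma0_rel_cong[OF r1 N _ hg]) (simp add: g_def)
  moreover have "[q2 * (g div g) = x2 * (y2 div g)] (mod h)"
    by (rule gamma0_rel_cong[OF r2 N _ hg]) (simp add: g_def gg)
  ultimately have "[q1 = x1 * (y1 div g)] (mod h)" "[q2 = x2 * (y2 div g)] (mod h)"
    using gpos by simp_all
  with cg have "[q1 = q2] (mod h)"
    unfolding g_def[symmetric] h_def[symmetric] by (metis cong_sym cong_trans)
  moreover have "int N = g * (int N div g)" unfolding g_def by simp
  moreover have "coprime q1 g" "coprime q2 g"
    using gamma0_rel_coprime[OF r1] gamma0_rel_coprime[OF r2] by auto
  ultimately have "((q1, g), (q2, g)) \<in> gamma0_rel N"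
    using gamma0_rel_same_denominator unfolding h_def by blast
  then show ?thesis using gamma0_rel_trans[OF gamma0_rel_trans[OF r1] gamma0_rel_sym[OF r2]] by blast
qed

lemma cusp_has_gcd_rep:
  assumes "P \<in> cusps N" "N > 0" "(x, y) \<in> P"
  obtains p where "(p, gcd y (int N)) \<in> P" "coprime p (gcd y (int N))"
proof -
  obtain p where r: "((x, y), (p, gcd y (int N))) \<in> gamma0_rel N"
    using gamma0_rel_to_gcd_rep[OF cusp_coprime[OF assms(1,3)] assms(2)] by blast
  then show ?thesis
    using that cusp_eq_class[OF assms(1,3)] gamma0_rel_coprime[OF r] by auto
qed

lemma finite_cusps:
  assumes N: "N > 0"
  shows "finite (cusps N)"
proof -
  have "cusps N \<subseteq> (\<lambda>(x, g). gamma0_rel N `` {(x, g)}) ` ({0..int N} \<times> {0..int N})"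
  proof
    fix P assume P: "P \<in> cusps N"
    obtain x y where xy: "(x, y) \<in> P" using cusp_nonempty[OF P] by auto
    define g where "g = gcd y (int N)"
    obtain p where p: "(p, g) \<in> P" "coprime p g" using cusp_has_gcd_rep[OF P N xy] unfolding g_def by metis
    have g: "g > 0" "g \<le> int N" using N unfolding g_def by (auto intro: gcd_le2_int)
    have "((p, g), (p mod g, g)) \<in> gamma0_rel N"
      using gamma0_rel_translate[OF p(2), of "- (p div g)"] by (simp add: minus_div_mult_eq_mod[symmetric])
    then have "P = gamma0_rel N `` {(p mod g, g)}"
      using cusp_eq_class[OF P p(1)] equiv_class_eq[OF equiv_gamma0_rel] by simp
    moreover have "(p mod g, g) \<in> {0..int N} \<times> {0..int N}"
      using g pos_mod_bound[of g p] by (auto simp: order.trans[OF less_imp_le[OF pos_mod_bound]])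
    ultimately show "P \<in> (\<lambda>(x, g). gamma0_rel N `` {(x, g)}) ` ({0..int N} \<times> {0..int N})" by force
  qed
  then show ?thesis by (rule finite_subset) auto
qed

section \<open>The Galois action on cusps\<close>

lemma galois_rel_exists:
  assumes N: "N > 0" and P: "P \<in> cusps N" and u: "coprime u (int N)"
  shows "\<exists>Q\<in>cusps N. galois_rel N u P Q"
proof -
  obtain x y where xy: "(x, y) \<in> P" using cusp_nonempty[OF P] by auto
  define g where "g = gcd y (int N)"
  obtain p where p: "(p, g) \<in> P" "coprime p g" using cusp_has_gcd_rep[OF P N xy] unfolding g_def by blast
  have "coprime u g" unfolding g_def by (rule coprime_divisors[OF dvd_refl gcd_dvd2 u])
  then have cp: "coprime (u * p) g" using p(2) by simp
  have "galois_rel N u P (gamma0_rel N `` {(u * p, g)})"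
    unfolding galois_rel_def
    by (rule exI[of _ p], rule exI[of _ g], rule exI[of _ "u * p"]) (use p(1) in_own_class[OF cp] in simp)
  then show ?thesis using class_in_cusps[OF cp] by blast
qed

lemma galois_rel_unique:
  assumes N: "N > 0" and P: "P \<in> cusps N" and Q1: "Q1 \<in> cusps N" and Q2: "Q2 \<in> cusps N"
    and g1: "galois_rel N u P Q1" and g2: "galois_rel N u P Q2"
  shows "Q1 = Q2"
proof -
  obtain x y x1 where a: "(x, y) \<in> P" "(x1, y) \<in> Q1" "[x1 = u * x] (mod int N)"
    using g1 unfolding galois_rel_def by blast
  obtain x' y' x2 where b: "(x', y') \<in> P" "(x2, y') \<in> Q2" "[x2 = u * x'] (mod int N)"
    using g2 unfolding galois_rel_def by blast
  have r: "((x, y), (x', y')) \<in> gamma0_rel N" using cusp_gamma0_rel[OF P a(1) b(1)] .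
  define g where "g = gcd y (int N)"
  define h where "h = gcd g (int N div g)"
  have gg: "gcd y' (int N) = g" using gamma0_rel_gcd_eq[OF r] unfolding g_def .
  have hN: "h dvd int N" unfolding h_def g_def by (meson dvd_trans gcd_dvd1 gcd_dvd2)
  have hg: "h dvd g" "h dvd int N div g" unfolding h_def by auto
  have "[x' * (y' div g) = x * (y div g)] (mod h)"
    by (rule gamma0_rel_cong[OF r N g_def hg])
  then have "[u * x' * (y' div g) = u * x * (y div g)] (mod h)"
    using cong_scalar_left by (simp add: mult.assoc)
  moreover have "[x1 * (y div g) = u * x * (y div g)] (mod h)"
    using cong_dvd_modulus[OF a(3) hN] by (rule cong_mult) simp
  moreover have "[x2 * (y' div g) = u * x' * (y' div g)] (mod h)"
    using cong_dvd_modulus[OF b(3) hN] by (rule cong_mult) simp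
  ultimately have "[x1 * (y div g) = x2 * (y' div g)] (mod h)"
    by (meson cong_sym cong_trans)
  then have "((x1, y), (x2, y')) \<in> gamma0_rel N"
    using gamma0_rel_if_invariants[OF N cusp_coprime[OF Q1 a(2)] cusp_coprime[OF Q2 b(2)]] gg
    unfolding g_def h_def by simp
  then show ?thesis using cusps_eqI[OF Q1 Q2 a(2) b(2)] by blast
qed

lemma galois_rel_sym:
  assumes g: "galois_rel N u P Q" and uv: "[u * v = 1] (mod int N)"
  shows "galois_rel N v Q P"
proof -
  obtain x y x' where a: "(x, y) \<in> P" "(x', y) \<in> Q" "[x' = u * x] (mod int N)"
    using g unfolding galois_rel_def by blast
  have "[v * x' = v * (u * x)] (mod int N)" using cong_scalar_left[OF a(3)] .
  moreover have "[v * (u * x) = x] (mod int N)"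
    using cong_scalar_right[OF uv, of x] by (simp add: algebra_simps)
  ultimately have "[x = v * x'] (mod int N)" by (meson cong_sym cong_trans)
  then show ?thesis unfolding galois_rel_def using a by blast
qed

lemma galois_rel_cong_unit:
  assumes uu': "[u = u'] (mod int N)" and g: "galois_rel N u P Q"
  shows "galois_rel N u' P Q"
proof -
  obtain x y x' where a: "(x, y) \<in> P" "(x', y) \<in> Q" "[x' = u * x] (mod int N)"
    using g unfolding galois_rel_def by blast
  have "[u * x = u' * x] (mod int N)" using uu' by (rule cong_mult) simp
  then show ?thesis using a cong_trans unfolding galois_rel_def by blast
qed

lemma rat_cusp_div0_galois_rel:
  assumes "D \<in> rat_cusp_div0 N" "coprime u (int N)" "Q \<in> cusps N" "galois_rel N u P Q" "P \<in> cusps N"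
  shows "D P = D Q"
  using assms unfolding rat_cusp_div0_def by blast

definition galois_act :: "nat \<Rightarrow> int \<Rightarrow> (int \<times> int) set \<Rightarrow> (int \<times> int) set" where
  "galois_act N u P = (THE Q. Q \<in> cusps N \<and> galois_rel N u P Q)"

lemma galois_act:
  assumes N: "N > 0" and P: "P \<in> cusps N" and u: "coprime u (int N)"
  shows "galois_act N u P \<in> cusps N" "galois_rel N u P (galois_act N u P)"
proof -
  have "\<exists>!Q. Q \<in> cusps N \<and> galois_rel N u P Q"
    using galois_rel_exists[OF N P u] galois_rel_unique[OF N P] by blast
  then have "galois_act N u P \<in> cusps N \<and> galois_rel N u P (galois_act N u P)"
    unfolding galois_act_def by (rule theI')
  then show "galois_act N u P \<in> cusps N" "galois_rel N u P (galois_act N u P)" by auto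
qed

lemma galois_act_eq:
  assumes N: "N > 0" and P: "P \<in> cusps N" and u: "coprime u (int N)" and Q: "Q \<in> cusps N"
    and g: "galois_rel N u P Q"
  shows "galois_act N u P = Q"
  using galois_rel_unique[OF N P galois_act(1)[OF N P u] Q galois_act(2)[OF N P u] g] .

lemma galois_act_inverse:
  assumes N: "N > 0" and P: "P \<in> cusps N" and u: "coprime u (int N)"
    and uv: "[u * v = 1] (mod int N)" and v: "coprime v (int N)"
  shows "galois_act N v (galois_act N u P) = P"
  using galois_act_eq[OF N galois_act(1)[OF N P u] v P galois_rel_sym[OF galois_act(2)[OF N P u] uv]] .

section \<open>The degeneracy map and the push-forward\<close>

text \<open>The reduced form of \<open>(l x, y)\<close> for coprime \<open>x, y\<close>.\<close>

definition beta_rep :: "nat \<Rightarrow> int \<Rightarrow> int \<Rightarrow> int \<times> int" where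
  "beta_rep l x y = (if int l dvd y then (x, y div int l) else (int l * x, y))"

lemma beta_rep_dvd: "int l dvd y \<Longrightarrow> beta_rep l x y = (x, y div int l)"
  unfolding beta_rep_def by simp

lemma beta_rep_not_dvd: "\<not> int l dvd y \<Longrightarrow> beta_rep l x y = (int l * x, y)"
  unfolding beta_rep_def by simp

lemma beta_rep_eq_reduced:
  assumes l: "Factorial_Ring.prime l" and cp: "coprime x y"
  shows "(int l * x div gcd (int l * x) y, y div gcd (int l * x) y) = beta_rep l x y"
proof -
  have g: "gcd (int l * x) y = gcd (int l) y"
    using cp by (simp add: gcd_mult_left_right_cancel coprime_commute)
  show ?thesis
  proof (cases "int l dvd y")
    case True
    then have "gcd (int l) y = int l" by simp
    then show ?thesis using True g l by (auto simp: beta_rep_def prime_gt_0_int)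
  next
    case False
    then have "gcd (int l) y = 1" using l prime_imp_coprime[of "int l" y] by simp
    then show ?thesis using False g unfolding beta_rep_def by auto
  qed
qed

lemma coprime_beta_rep:
  assumes l: "Factorial_Ring.prime l" and cp: "coprime x y"
  shows "coprime (fst (beta_rep l x y)) (snd (beta_rep l x y))"
proof (cases "int l dvd y")
  case True
  then obtain z where z: "y = int l * z" by (auto elim: dvdE)
  have "int l > 0" using l prime_gt_0_nat by simp
  then show ?thesis using True z cp unfolding beta_rep_def by simp
next
  case False
  then have "coprime (int l) y" using prime_imp_coprime[of "int l"] l by simp
  then show ?thesis using False cp unfolding beta_rep_def by simp
qed

lemma beta_rep_class_in_cusps:
  "Factorial_Ring.prime l \<Longrightarrow> coprime x y \<Longrightarrow> gamma0_rel M `` {beta_rep l x y} \<in> cusps M"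
  using class_in_cusps[OF coprime_beta_rep] by simp

lemma beta_rep_in_own_class:
  "Factorial_Ring.prime l \<Longrightarrow> coprime x y \<Longrightarrow> beta_rep l x y \<in> gamma0_rel M `` {beta_rep l x y}"
  using in_own_class[OF coprime_beta_rep] by simp

lemma beta_rep_gamma0_rel:
  assumes l: "Factorial_Ring.prime l" and r: "((x, y), (x', y')) \<in> gamma0_rel (M * l)"
  shows "(beta_rep l x y, beta_rep l x' y') \<in> gamma0_rel M"
proof -
  obtain a b c d where G: "in_Gamma0 (M * l) a b c d" "x' = a * x + b * y" "y' = c * x + d * y"
    "coprime x y" using gamma0_relE[OF r] by metis
  obtain c0 where c: "c = int M * int l * c0" using G(1) unfolding in_Gamma0_def by auto
  have det: "a * d - b * c = 1" using G(1) unfolding in_Gamma0_def by simp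
  have lpos: "int l > 0" using l prime_gt_0_nat by simp
  have G': "in_Gamma0 M a (int l * b) (int M * c0) d"
    using det c unfolding in_Gamma0_def by (simp add: algebra_simps)
  have "coprime (int l) d"
    using coprime_if_bezout[of "- b * int M * c0" "int l" a d] det c by (simp add: algebra_simps)
  moreover have "y' = int l * (int M * c0 * x) + d * y" using G(3) c by (simp add: algebra_simps)
  ultimately have iff: "int l dvd y' \<longleftrightarrow> int l dvd y"
    by (simp add: dvd_add_right_iff coprime_dvd_mult_right_iff)
  show ?thesis
  proof (cases "int l dvd y")
    case True
    then obtain z where z: "y = int l * z" by (auto elim: dvdE)
    have "coprime x z" using G(4) z by simp
    moreover have "beta_rep l x y = (x, z)" using True z lpos by (simp add: beta_rep_dvd)
    moreover have "y' = int l * (int M * c0 * x + d * z)" using G(3) c z by (simp add: algebra_simps)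
    then have "beta_rep l x' y' = (a * x + (int l * b) * z, int M * c0 * x + d * z)"
      using G(2) z lpos by (simp add: beta_rep_dvd algebra_simps)
    ultimately show ?thesis using gamma0_relI[OF _ G'] by simp
  next
    case False
    have "coprime (int l * x) y"
      using coprime_beta_rep[OF l G(4)] False by (simp add: beta_rep_not_dvd)
    moreover have "beta_rep l x y = (int l * x, y)" using False by (simp add: beta_rep_not_dvd)
    moreover have "beta_rep l x' y' = (a * (int l * x) + (int l * b) * y, int M * c0 * (int l * x) + d * y)"
      using iff False G(2,3) c by (simp add: beta_rep_not_dvd algebra_simps)
    ultimately show ?thesis using gamma0_relI[OF _ G'] by simp
  qed
qed

lemma beta_cusp_eq:
  assumes l: "Factorial_Ring.prime l" and P: "P \<in> cusps (M * l)" and xy: "(x, y) \<in> P"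
  shows "beta_cusp l M P = gamma0_rel M `` {beta_rep l x y}"
proof -
  obtain x0 y0 where s: "(SOME p. p \<in> P) = (x0, y0)" by (cases "SOME p. p \<in> P") auto
  have m: "(x0, y0) \<in> P" using some_in_cusp[OF P] s by simp
  have "beta_cusp l M P = gamma0_rel M `` {beta_rep l x0 y0}"
    unfolding beta_cusp_def s using beta_rep_eq_reduced[OF l cusp_coprime[OF P m]] by (simp add: Let_def)
  also have "\<dots> = gamma0_rel M `` {beta_rep l x y}"
    using beta_rep_gamma0_rel[OF l cusp_gamma0_rel[OF P m xy]] equiv_class_eq[OF equiv_gamma0_rel] by simp
  finally show ?thesis .
qed

lemma beta_cusp_in_cusps:
  assumes l: "Factorial_Ring.prime l" and P: "P \<in> cusps (M * l)"
  shows "beta_cusp l M P \<in> cusps M"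
proof -
  obtain x y where xy: "(x, y) \<in> P" using cusp_nonempty[OF P] by auto
  show ?thesis using beta_cusp_eq[OF l P xy] beta_rep_class_in_cusps[OF l cusp_coprime[OF P xy]] by simp
qed

lemma beta_rep_in_beta_cusp:
  assumes l: "Factorial_Ring.prime l" and P: "P \<in> cusps (M * l)" and xy: "(x, y) \<in> P"
  shows "beta_rep l x y \<in> beta_cusp l M P"
  using beta_cusp_eq[OF l P xy] beta_rep_in_own_class[OF l cusp_coprime[OF P xy]] by simp

lemma beta_cusp_class:
  assumes l: "Factorial_Ring.prime l" and cp: "coprime x y"
  shows "beta_cusp l M (gamma0_rel (M * l) `` {(x, y)}) = gamma0_rel M `` {beta_rep l x y}"
  using beta_cusp_eq[OF l class_in_cusps[OF cp] in_own_class[OF cp]] .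

lemma beta_cusp_galois_rel:
  assumes l: "Factorial_Ring.prime l" and P: "P \<in> cusps (M * l)" and P': "P' \<in> cusps (M * l)"
    and g: "galois_rel (M * l) u P P'"
  shows "galois_rel M u (beta_cusp l M P) (beta_cusp l M P')"
proof -
  obtain x y x' where a: "(x, y) \<in> P" "(x', y) \<in> P'" "[x' = u * x] (mod int (M * l))"
    using g unfolding galois_rel_def by blast
  have cM: "[x' = u * x] (mod int M)"
    using cong_dvd_modulus[OF a(3), of "int M"] by simp
  note m = beta_rep_in_beta_cusp[OF l P a(1)] beta_rep_in_beta_cusp[OF l P' a(2)]
  show ?thesis
  proof (cases "int l dvd y")
    case True
    then show ?thesis using m cM unfolding galois_rel_def beta_rep_dvd[OF True] by blast
  next
    case False
    have "[int l * x' = u * (int l * x)] (mod int M)"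
      using cong_scalar_left[OF cM, of "int l"] by (simp add: algebra_simps)
    then show ?thesis using m unfolding galois_rel_def beta_rep_not_dvd[OF False] by blast
  qed
qed

lemma beta_cusp_galois_act:
  assumes M: "M > 0" and l: "Factorial_Ring.prime l" and P: "P \<in> cusps (M * l)"
    and w: "coprime w (int (M * l))" and Q: "Q \<in> cusps M" and g: "galois_rel M w (beta_cusp l M P) Q"
  shows "beta_cusp l M (galois_act (M * l) w P) = Q"
proof -
  have "M * l > 0" using M l prime_gt_0_nat by simp
  note act = galois_act[OF this P w]
  have "galois_rel M w (beta_cusp l M P) (beta_cusp l M (galois_act (M * l) w P))"
    using beta_cusp_galois_rel[OF l P act] .
  then show ?thesis
    using galois_rel_unique[OF M beta_cusp_in_cusps[OF l P] beta_cusp_in_cusps[OF l act(1)] Q] g by blast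
qed

lemma sum_beta_push:
  assumes M: "M > 0" and l: "Factorial_Ring.prime l"
  shows "(\<Sum>Q\<in>cusps M. beta_push l M D Q) = (\<Sum>P\<in>cusps (M * l). D P)"
proof -
  have "M * l > 0" using M l prime_gt_0_nat by simp
  then have "(\<Sum>Q\<in>cusps M. \<Sum>P\<in>{P. P \<in> cusps (M * l) \<and> beta_cusp l M P = Q}. D P)
      = (\<Sum>P\<in>cusps (M * l). D P)"
    by (intro sum.group finite_cusps M) (auto intro: beta_cusp_in_cusps[OF l])
  then show ?thesis unfolding beta_push_def by simp
qed

text \<open>The Galois action at level \<open>M l\<close>, for a lift of \<open>u\<close> prime to \<open>M l\<close>, permutes the cusps
  over \<open>Q\<close> onto those over \<open>\<sigma>\<^sub>u Q\<close>.\<close>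

lemma beta_push_galois_invariant:
  assumes M: "M > 0" and l: "Factorial_Ring.prime l" and D: "D \<in> rat_cusp_div0 (M * l)"
    and Q: "Q \<in> cusps M" and Q': "Q' \<in> cusps M" and u: "coprime u (int M)"
    and g: "galois_rel M u Q Q'"
  shows "beta_push l M D Q = beta_push l M D Q'"
proof -
  have N: "M * l > 0" using M l prime_gt_0_nat by simp
  obtain k where k: "coprime (u + k * int M) (int (M * l))"
    using exists_coprime_translate[OF _ u] N by (metis of_nat_0_less_iff less_irrefl)
  define u' where "u' = u + k * int M"
  have u': "coprime u' (int (M * l))" using k unfolding u'_def .
  have g': "galois_rel M u' Q Q'"
    using galois_rel_cong_unit[OF _ g] unfolding u'_def by (simp add: cong_iff_dvd_diff)
  obtain v where v: "[u' * v = 1] (mod int (M * l))" using cong_solve_coprime_int[OF u'] by blast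
  have v': "coprime v (int (M * l))" and vu: "[v * u' = 1] (mod int (M * l))"
    using v coprime_iff_invertible_int by (auto simp: mult.commute)
  have vM: "[u' * v = 1] (mod int M)" using cong_dvd_modulus[OF v, of "int M"] by simp
  have "(\<Sum>P\<in>{P \<in> cusps (M * l). beta_cusp l M P = Q}. D P)
      = (\<Sum>P\<in>{P \<in> cusps (M * l). beta_cusp l M P = Q'}. D P)"
  proof (rule sum.reindex_bij_witness[where i="galois_act (M * l) v" and j="galois_act (M * l) u'"])
    fix P assume "P \<in> {P \<in> cusps (M * l). beta_cusp l M P = Q}"
    then have Pc: "P \<in> cusps (M * l)" and bP: "beta_cusp l M P = Q" by auto
    show "galois_act (M * l) v (galois_act (M * l) u' P) = P" by (rule galois_act_inverse[OF N Pc u' v v'])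
    show "galois_act (M * l) u' P \<in> {P \<in> cusps (M * l). beta_cusp l M P = Q'}"
      using beta_cusp_galois_act[OF M l Pc u' Q'] galois_act(1)[OF N Pc u'] g' bP by simp
    show "D (galois_act (M * l) u' P) = D P"
      using rat_cusp_div0_galois_rel[OF D u' galois_act[OF N Pc u'] Pc] by simp
  next
    fix P assume "P \<in> {P \<in> cusps (M * l). beta_cusp l M P = Q'}"
    then have Pc: "P \<in> cusps (M * l)" and bP: "beta_cusp l M P = Q'" by auto
    show "galois_act (M * l) u' (galois_act (M * l) v P) = P" by (rule galois_act_inverse[OF N Pc v' vu u'])
    show "galois_act (M * l) v P \<in> {P \<in> cusps (M * l). beta_cusp l M P = Q}"
      using beta_cusp_galois_act[OF M l Pc v' Q] galois_act(1)[OF N Pc v'] galois_rel_sym[OF g' vM] bP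
      by simp
  qed
  then show ?thesis unfolding beta_push_def using Q Q' by simp
qed

lemma beta_push_in_rat_cusp_div0:
  assumes M: "M > 0" and l: "Factorial_Ring.prime l" and D: "D \<in> rat_cusp_div0 (M * l)"
  shows "beta_push l M D \<in> rat_cusp_div0 M"
  unfolding rat_cusp_div0_def
proof (intro CollectI conjI allI impI ballI)
  fix P assume "P \<notin> cusps M" then show "beta_push l M D P = 0" unfolding beta_push_def by simp
next
  show "(\<Sum>P\<in>cusps M. beta_push l M D P) = 0"
    using sum_beta_push[OF M l] D unfolding rat_cusp_div0_def by simp
next
  fix u P Q assume "coprime u (int M)" "P \<in> cusps M" "Q \<in> cusps M" "galois_rel M u P Q"
  then show "beta_push l M D P = beta_push l M D Q" using beta_push_galois_invariant[OF M l D] by blast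
qed

lemma beta_push_add: "beta_push l M (\<lambda>P. D P + E P) = (\<lambda>Q. beta_push l M D Q + beta_push l M E Q)"
  unfolding beta_push_def by (auto simp: sum.distrib)

lemma beta_push_uminus: "beta_push l M (\<lambda>P. - D P) = (\<lambda>Q. - beta_push l M D Q)"
  unfolding beta_push_def by (auto simp: sum_negf)

section \<open>Fibres of the degeneracy map\<close>

lemma gamma0_rel_raise_level_not_dvd:
  fixes z y1 x' y' :: int
  assumes l: "Factorial_Ring.prime l" and cz: "coprime z y1" and ny: "\<not> int l dvd y1"
    and r: "((int l * z, y1), (int l * x', y')) \<in> gamma0_rel M"
  shows "((z, y1), (x', y')) \<in> gamma0_rel (M * l)"
proof -
  obtain a b c d where G: "in_Gamma0 M a b c d" "int l * x' = a * (int l * z) + b * y1"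
    "y' = c * (int l * z) + d * y1"
    using gamma0_relE[OF r] by metis
  have lpos: "int l > 0" using l prime_gt_0_nat by simp
  have "b * y1 = int l * (x' - a * z)" using G(2) by (simp add: algebra_simps)
  then have "int l dvd b" using ny l prime_dvd_mult_iff[of "int l"] by (metis dvd_triv_left prime_nat_int_transfer)
  then obtain b1 where b1: "b = int l * b1" by (auto elim: dvdE)
  have "in_Gamma0 (M * l) a b1 (c * int l) d"
    using G(1) b1 unfolding in_Gamma0_def by (auto simp: algebra_simps mult_dvd_mono)
  moreover have "x' = a * z + b1 * y1"
  proof -
    have "int l * x' = int l * (a * z + b1 * y1)" using G(2) b1 by (simp add: algebra_simps)
    then show ?thesis using lpos by simp
  qed
  ultimately show ?thesis by (rule gamma0_relI[OF cz]) (simp add: G(3) algebra_simps)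
qed

text \<open>The matrix below is the given one multiplied on the right by the unipotent matrix
  \<open>(1 - n x y, n x\<^sup>2; - n y\<^sup>2, 1 + n x y)\<close>, which fixes \<open>(x, y)\<close>; \<open>n\<close> is chosen to make the
  upper right entry divisible by \<open>l\<close>, and \<open>l\<^sup>A | y\<^sup>2\<close> keeps the lower left entry divisible by \<open>M\<close>.\<close>

lemma gamma0_rel_raise_level_dvd:
  fixes x y x' z' m :: int
  assumes l: "Factorial_Ring.prime l" and cp: "coprime x y" and ly: "int l dvd y"
    and Ay: "int l ^ A dvd y ^ 2" and Mm: "int M = int l ^ A * m" and cm: "coprime m (int l)"
    and lM: "int l dvd int M" and r: "((x, y), (x', z')) \<in> gamma0_rel M"
  shows "((x, int l * y), (x', int l * z')) \<in> gamma0_rel (M * l)"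
proof -
  define L where "L = int l"
  obtain a b c d where G: "in_Gamma0 M a b c d" "x' = a * x + b * y" "z' = c * x + d * y"
    using gamma0_relE[OF r] by metis
  have det: "a * d - b * c = 1" and Mc: "int M dvd c" using G(1) unfolding in_Gamma0_def by auto
  obtain c' where c': "c = L * c'" using dvd_trans[OF lM Mc] unfolding L_def by (auto elim: dvdE)
  have "coprime a L" using coprime_if_bezout[of d a "- b * c'" L] det c' by (simp add: algebra_simps)
  moreover have "coprime x L" using cp ly unfolding L_def by (meson coprime_divisors dvd_refl)
  ultimately have "coprime (a * m * x ^ 2) L" using cm unfolding L_def by simp
  then obtain s r0 where sr: "s * (a * m * x ^ 2) + r0 * L = 1"
    using bezout_int[of "a * m * x ^ 2" L] by (auto simp: coprime_iff_gcd_eq_1)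
  define n where "n = m * (- b * s)"
  define A' where "A' = a * (1 - n * x * y) - b * n * y ^ 2"
  define B' where "B' = a * n * x ^ 2 + b * (1 + n * x * y)"
  define C' where "C' = c * (1 - n * x * y) - d * n * y ^ 2"
  define D' where "D' = c * n * x ^ 2 + d * (1 + n * x * y)"
  obtain y1 where y1: "y = L * y1" using ly unfolding L_def by (auto elim: dvdE)
  define B1 where "B1 = b * r0 + b * n * x * y1"
  have "B' = b * (1 - s * (a * m * x ^ 2)) + b * n * x * y"
    unfolding B'_def n_def by (simp add: algebra_simps power2_eq_square)
  also have "1 - s * (a * m * x ^ 2) = r0 * L" using sr by linarith
  finally have B'L: "B' = L * B1" unfolding B1_def y1 by (simp add: algebra_simps)
  obtain q where q: "y ^ 2 = L ^ A * q" using Ay unfolding L_def by (auto elim: dvdE)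
  have "d * n * y ^ 2 = int M * (d * (- b * s) * q)" unfolding n_def q Mm L_def by (simp add: algebra_simps)
  then have MC': "int M dvd C'" unfolding C'_def using Mc by (simp add: dvd_diff)
  have "A' * D' - B' * C'
      = (a * d - b * c) * ((1 - n * x * y) * (1 + n * x * y) + (n * x ^ 2) * (n * y ^ 2))"
    unfolding A'_def B'_def C'_def D'_def by (simp add: algebra_simps power2_eq_square)
  then have "A' * D' - B' * C' = 1" using det by (simp add: algebra_simps power2_eq_square)
  then have G': "in_Gamma0 (M * l) A' B1 (C' * L) D'"
    unfolding in_Gamma0_def using B'L MC' unfolding L_def by (auto simp: algebra_simps mult_dvd_mono)
  have ex: "A' * x + B' * y = x'" and ey: "C' * x + D' * y = z'"
    unfolding A'_def B'_def C'_def D'_def G(2,3) by (simp_all add: algebra_simps power2_eq_square)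
  have "coprime x (L * y)" using coprime_translate_mult[OF cp, of L 0] ly unfolding L_def by simp
  moreover have "x' = A' * x + B1 * (L * y)" using ex B'L by (simp add: algebra_simps)
  moreover have "L * z' = C' * L * x + D' * (L * y)" by (simp add: algebra_simps flip: ey)
  ultimately show ?thesis unfolding L_def[symmetric] by (rule gamma0_relI[OF _ G'])
qed

lemma gamma0_rel_raise_level_translate:
  fixes x y x' z' :: int
  assumes l: "Factorial_Ring.prime l" and cp: "coprime x y" and ly: "int l dvd y"
    and lM: "int l dvd int M" and r: "((x, y), (x', z')) \<in> gamma0_rel M"
  obtains b where "b \<in> {0..<int l}" "((x + b * y, int l * y), (x', int l * z')) \<in> gamma0_rel (M * l)"
proof -
  define L where "L = int l"
  have lpos: "L > 0" unfolding L_def using l prime_gt_0_nat by simp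
  obtain a b0 c d where G: "in_Gamma0 M a b0 c d" "x' = a * x + b0 * y" "z' = c * x + d * y"
    using gamma0_relE[OF r] by metis
  have det: "a * d - b0 * c = 1" and Mc: "int M dvd c" using G(1) unfolding in_Gamma0_def by auto
  obtain c' where c': "c = L * c'" using dvd_trans[OF lM Mc] unfolding L_def by (auto elim: dvdE)
  have "coprime a L" using coprime_if_bezout[of d a "- b0 * c'" L] det c' by (simp add: algebra_simps)
  then obtain s r0 where sr: "s * a + r0 * L = 1"
    using bezout_int[of a L] by (auto simp: coprime_iff_gcd_eq_1)
  \<comment> \<open>\<open>b \<equiv> b0 / a (mod l)\<close>\<close>
  define b where "b = (b0 * s) mod L"
  have b: "b \<in> {0..<L}" unfolding b_def using lpos by simp
  obtain q' where bq: "b = b0 * s - L * q'" unfolding b_def by (metis minus_div_mult_eq_mod mult.commute)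
  define e where "e = b0 * r0 + a * q'"
  have "b0 - a * b = b0 * (1 - s * a) + a * L * q'" unfolding bq by (simp add: algebra_simps)
  also have "1 - s * a = r0 * L" using sr by linarith
  finally have eL: "b0 - a * b = L * e" unfolding e_def by (simp add: algebra_simps)
  have "L * (a * (d - c * b) - e * (c * L)) = L * (a * d - b0 * c)" using eL by (simp add: algebra_simps)
  then have "a * (d - c * b) - e * (c * L) = 1" using det lpos by simp
  then have G': "in_Gamma0 (M * l) a e (c * L) (d - c * b)"
    unfolding in_Gamma0_def L_def using Mc by (simp add: mult_dvd_mono)
  have "coprime (x + b * y) (L * y)" using coprime_translate_mult[OF cp, of L b] ly unfolding L_def by simp
  moreover have "a * (x + b * y) + e * (L * y) = a * x + (a * b + L * e) * y" by (simp add: algebra_simps)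
  ultimately have "((x + b * y, L * y), (x', L * z')) \<in> gamma0_rel (M * l)"
    using eL G(2,3) by (intro gamma0_relI[OF _ G']) (simp_all add: algebra_simps)
  then show ?thesis using that b unfolding L_def by blast
qed

lemma power_dvd_gcd_square_decompose:
  fixes y :: int
  assumes l: "Factorial_Ring.prime l" and y: "y \<noteq> 0" and M: "M > 0"
    and LA: "int l ^ A dvd int M" and bad: "\<not> int l ^ A dvd (gcd y (int M)) ^ 2"
  obtains j y0 G0 where "y = int l ^ j * y0" "\<not> int l dvd y0" "gcd y (int M) = int l ^ j * G0"
    "int l ^ (2 * j + 1) * G0 dvd int M"
proof -
  define L where "L = int l"
  define G where "G = gcd y (int M)"
  have lp: "Factorial_Ring.prime L" and Lpos: "L > 0" unfolding L_def using l prime_gt_0_nat by simp_all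
  obtain y0 where yd: "y = L ^ multiplicity L y * y0" "\<not> L dvd y0"
    using multiplicity_decompose'[OF y] lp not_prime_unit by blast
  define j where "j = multiplicity L y"
  have yj: "y = L ^ j * y0" using yd unfolding j_def by simp
  have jA: "j \<le> A"
  proof (rule ccontr)
    assume "\<not> j \<le> A"
    then have "L ^ A dvd y" using yj le_imp_power_dvd[of A j L] by (simp add: dvd_mult2)
    then have "L ^ A dvd G ^ 2" using LA unfolding G_def L_def by (simp add: power2_eq_square)
    then show False using bad unfolding G_def L_def by simp
  qed
  obtain M' where M': "int M = L ^ j * M'"
    using dvd_trans[OF le_imp_power_dvd[OF jA] LA[folded L_def]] by (auto elim: dvdE)
  define G0 where "G0 = gcd y0 M'"
  have "G = normalize (L ^ j * G0)" unfolding G_def G0_def yj M' by (rule gcd_mult_left)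
  then have GG0: "G = L ^ j * G0" using Lpos unfolding G0_def by (simp add: abs_mult)
  have nG0: "\<not> L dvd G0" using yd(2) unfolding G0_def by (meson dvd_trans gcd_dvd1)
  have j2A: "2 * j + 1 \<le> A"
  proof (rule ccontr)
    assume "\<not> 2 * j + 1 \<le> A"
    then have "L ^ A dvd L ^ (2 * j)" by (simp add: le_imp_power_dvd)
    moreover have "G ^ 2 = L ^ (2 * j) * G0 ^ 2" unfolding GG0 by (simp add: power_mult_distrib power_mult mult.commute)
    ultimately have "L ^ A dvd G ^ 2" by simp
    then show False using bad unfolding G_def L_def by simp
  qed
  have "L ^ (2 * j + 1) dvd int M" using dvd_trans[OF le_imp_power_dvd[OF j2A] LA[folded L_def]] .
  moreover have "G0 dvd int M" using GG0 unfolding G_def by (metis dvd_mult_right gcd_dvd2)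
  moreover have "coprime (L ^ (2 * j + 1)) G0" using prime_imp_coprime[OF lp nG0] by simp
  ultimately have "L ^ (2 * j + 1) * G0 dvd int M" by (rule divides_mult)
  then show ?thesis using that yj yd(2) GG0 unfolding G_def L_def by blast
qed

text \<open>The translates are told apart by the second cusp invariant, taken modulo \<open>l^(j + 1)\<close>.\<close>

lemma gamma0_rel_translates_eq:
  fixes x y y0 G0 b b' :: int
  assumes l: "Factorial_Ring.prime l" and M: "M > 0"
    and yj: "y = int l ^ j * y0" and ny0: "\<not> int l dvd y0" and G: "gcd y (int M) = int l ^ j * G0"
    and G0M: "int l ^ (2 * j + 1) * G0 dvd int M"
    and b: "b \<in> {0..<int l}" and b': "b' \<in> {0..<int l}"
    and r: "((x + b * y, int l * y), (x + b' * y, int l * y)) \<in> gamma0_rel (M * l)"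
  shows "b = b'"
proof -
  define L where "L = int l"
  have lp: "Factorial_Ring.prime L" and Lpos: "L > 0" unfolding L_def using l prime_gt_0_nat by simp_all
  have "L ^ j * G0 > 0" using G M unfolding L_def by (metis gcd_pos_int of_nat_0_less_iff less_irrefl)
  then have G0pos: "G0 > 0" using Lpos by (simp add: zero_less_mult_iff)
  have "L ^ j * G0 dvd L ^ j * y0" using G yj unfolding L_def by (metis gcd_dvd1)
  then obtain w where w: "y0 = G0 * w" using Lpos by (auto elim: dvdE)
  have nw: "\<not> L dvd w" using ny0 w unfolding L_def by (metis dvd_mult)
  define m where "m = L ^ (j + 1)"
  define gN where "gN = gcd (L * y) (int (M * l))"
  have "gN = gcd (L * y) (L * int M)" unfolding gN_def L_def by (simp add: mult.commute)
  also have "\<dots> = normalize (L * gcd y (int M))" by (rule gcd_mult_left)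
  finally have gN: "gN = m * G0" unfolding G m_def L_def[symmetric] using Lpos G0pos by (simp add: abs_mult)
  obtain k where k: "int M = L ^ (2 * j + 1) * G0 * k" using G0M unfolding L_def by (auto elim: dvdE)
  have "int (M * l) = gN * (m * k)"
    unfolding gN m_def of_nat_mult k L_def[symmetric] by (simp add: power_add power_mult power2_eq_square algebra_simps)
  then have quot: "int (M * l) div gN = m * k"
    using Lpos G0pos unfolding gN m_def by simp
  have "L * y = gN * w" unfolding gN m_def yj w L_def by (simp add: algebra_simps)
  then have Lyg: "L * y div gN = w" using Lpos G0pos unfolding gN m_def by simp
  have "[(x + b' * y) * (L * y div gN) = (x + b * y) * (L * y div gN)] (mod m)"
  proof (rule gamma0_rel_cong[OF r[folded L_def]])
    show "M * l > 0" using M l prime_gt_0_nat by simp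
    show "gN = gcd (L * y) (int (M * l))" by (rule gN_def)
    show "m dvd gN" "m dvd int (M * l) div gN" using gN quot by simp_all
  qed
  then have "m dvd (x + b' * y) * w - (x + b * y) * w" unfolding Lyg cong_iff_dvd_diff .
  moreover have "(x + b' * y) * w - (x + b * y) * w = L ^ j * ((b' - b) * y0 * w)"
    unfolding yj L_def by (simp add: algebra_simps)
  ultimately have "L ^ j * L dvd L ^ j * ((b' - b) * y0 * w)" unfolding m_def by (simp add: mult.commute)
  then have "L dvd (b' - b) * y0 * w" using Lpos by simp
  then have "[b' = b] (mod L)" using lp ny0 nw unfolding L_def
    by (simp add: prime_dvd_mult_iff cong_iff_dvd_diff)
  then show "b = b'" using b b' cong_less_imp_eq_int[of b' "int l" b] unfolding L_def by simp
qed

definition beta_fibre :: "nat \<Rightarrow> nat \<Rightarrow> (int \<times> int) set \<Rightarrow> (int \<times> int) set set" where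
  "beta_fibre l M Q = {P \<in> cusps (M * l). beta_cusp l M P = Q}"

lemma beta_push_eq_sum_fibre: "Q \<in> cusps M \<Longrightarrow> beta_push l M D Q = (\<Sum>P\<in>beta_fibre l M Q. D P)"
  unfolding beta_push_def beta_fibre_def by simp

lemma finite_beta_fibre: "M > 0 \<Longrightarrow> Factorial_Ring.prime l \<Longrightarrow> finite (beta_fibre l M Q)"
  unfolding beta_fibre_def using finite_cusps[of "M * l"] prime_gt_0_nat[of l] by simp

lemma gcd_mult_level:
  assumes l: "Factorial_Ring.prime l" and ly: "int l dvd y"
  shows "gcd y (int (M * l)) = int l * gcd (y div int l) (int M)"
proof -
  have lpos: "int l > 0" using l prime_gt_0_nat by simp
  obtain z where z: "y = int l * z" using ly by (auto elim: dvdE)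
  have "gcd y (int (M * l)) = gcd (int l * z) (int l * int M)" using z by (simp add: mult.commute)
  also have "\<dots> = normalize (int l * gcd z (int M))" by (rule gcd_mult_left)
  finally show ?thesis using z lpos by (simp add: abs_mult)
qed

text \<open>Weights of the cusps \<open>x/y\<close> of \<open>X\<^sub>0(M l)\<close> as a function of \<open>g = gcd y (M l)\<close>, where \<open>l\<^sup>A\<close> is
  the exact power of \<open>l\<close> dividing \<open>M\<close>. Over a cusp \<open>x/y\<close> of \<open>X\<^sub>0(M)\<close> with \<open>G = gcd y M\<close>, the
  fibre of \<open>\<beta>\<close> consists of
  \<^item> if \<open>l\<close> does not divide \<open>G\<close>: one cusp with \<open>l\<close> not dividing \<open>g\<close> (weight \<open>t\<close>), all others
    having \<open>l\<close> exactly dividing \<open>g\<close> (weight \<open>0\<close>);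
  \<^item> if \<open>l | G\<close> and \<open>l\<^sup>A | G\<^sup>2\<close>: the single cusp \<open>x/(l y)\<close> (weight \<open>t\<close>);
  \<^item> otherwise: the \<open>l\<close> distinct cusps \<open>(x + b y)/(l y)\<close>, \<open>0 \<le> b < l\<close> (weight \<open>1\<close> each).

  So the weights over each fibre add up to \<open>t\<close>, provided \<open>t = l\<close> or \<open>A \<le> 2\<close> (which rules out
  the last case).\<close>

definition fibre_weight :: "nat \<Rightarrow> nat \<Rightarrow> int \<Rightarrow> int \<Rightarrow> int" where
  "fibre_weight l A t g = (if \<not> int l dvd g then t else if \<not> int l ^ 2 dvd g then 0
     else if int l ^ (A + 2) dvd g ^ 2 then t else 1)"

definition cusp_weight :: "nat \<Rightarrow> nat \<Rightarrow> nat \<Rightarrow> int \<Rightarrow> (int \<times> int) set \<Rightarrow> int" where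
  "cusp_weight l M A t P = fibre_weight l A t (gcd (snd (SOME p. p \<in> P)) (int (M * l)))"

lemma cusp_weight_eq:
  assumes P: "P \<in> cusps (M * l)" and xy: "(x, y) \<in> P"
  shows "cusp_weight l M A t P = fibre_weight l A t (gcd y (int (M * l)))"
proof -
  obtain x0 y0 where s: "(SOME p. p \<in> P) = (x0, y0)" by (cases "SOME p. p \<in> P") auto
  have "(x0, y0) \<in> P" using some_in_cusp[OF P] s by simp
  then have "gcd y0 (int (M * l)) = gcd y (int (M * l))"
    using gamma0_rel_gcd_eq[OF cusp_gamma0_rel[OF P xy]] by simp
  then show ?thesis unfolding cusp_weight_def s by simp
qed

lemma fibre_weight_mult_not_dvd:
  assumes l: "Factorial_Ring.prime l" and "\<not> int l dvd g"
  shows "fibre_weight l A t (int l * g) = 0"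
proof -
  have "int l > 0" using l prime_gt_0_nat by simp
  then have "\<not> int l ^ 2 dvd int l * g" using assms(2) by (simp add: power2_eq_square)
  then show ?thesis unfolding fibre_weight_def by simp
qed

lemma fibre_weight_mult_dvd:
  assumes l: "Factorial_Ring.prime l" and "int l dvd g"
  shows "fibre_weight l A t (int l * g) = (if int l ^ A dvd g ^ 2 then t else 1)"
proof -
  have lpos: "int l > 0" using l prime_gt_0_nat by simp
  have "int l ^ 2 dvd int l * g" using assms(2) by (simp add: power2_eq_square)
  moreover have "int l ^ (A + 2) dvd (int l * g) ^ 2 \<longleftrightarrow> int l ^ A dvd g ^ 2"
  proof -
    have e1: "int l ^ (A + 2) = int l ^ 2 * int l ^ A" by (subst power_add) (simp add: mult.commute)
    have e2: "(int l * g) ^ 2 = int l ^ 2 * g ^ 2" by (simp add: power_mult_distrib)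
    have "int l ^ 2 * int l ^ A dvd int l ^ 2 * g ^ 2 \<longleftrightarrow> int l ^ A dvd g ^ 2"
      using lpos by (subst dvd_mult_cancel_left) simp
    then show ?thesis unfolding e1 e2 .
  qed
  ultimately show ?thesis unfolding fibre_weight_def by simp
qed

lemma cusp_has_rep_mult_prime:
  assumes l: "Factorial_Ring.prime l" and Q: "Q \<in> cusps M" and xy: "(x, y) \<in> Q"
    and nG: "\<not> int l dvd gcd y (int M)"
  obtains z y1 where "(int l * z, y1) \<in> Q" "\<not> int l dvd y1" "coprime z y1"
proof -
  define L where "L = int l"
  have lp: "Factorial_Ring.prime L" unfolding L_def using l by simp
  have cxy: "coprime x y" using cusp_coprime[OF Q xy] .
  obtain x1 y1 where xy1: "(x1, y1) \<in> Q" "\<not> L dvd y1"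
  proof (cases "L dvd y")
    case False then show ?thesis using that xy by blast
  next
    case True
    have "\<not> L dvd int M" using True nG unfolding L_def by simp
    moreover have "\<not> L dvd x" using True cxy lp not_prime_unit coprime_common_divisor by blast
    ultimately have "\<not> L dvd int M * 1 * x + y" using True lp by (simp add: dvd_add_left_iff prime_dvd_mult_iff)
    moreover have "(x, int M * 1 * x + y) \<in> Q"
      using gamma0_rel_shear[OF cxy] cusp_eq_class[OF Q xy] by blast
    ultimately show ?thesis using that by blast
  qed
  have "coprime y1 L" using prime_imp_coprime[OF lp xy1(2)] by (simp add: coprime_commute)
  then obtain s r where sr: "s * y1 + r * L = 1" using bezout_int[of y1 L] by (auto simp: coprime_iff_gcd_eq_1)
  have "x1 + (- x1 * s) * y1 = x1 * (1 - s * y1)" by (simp add: algebra_simps)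
  also have "1 - s * y1 = r * L" using sr by linarith
  finally have "x1 + (- x1 * s) * y1 = L * (x1 * r)" by (simp add: algebra_simps)
  then have "(L * (x1 * r), y1) \<in> Q"
    using gamma0_rel_translate[OF cusp_coprime[OF Q xy1(1)], of "- x1 * s"] cusp_eq_class[OF Q xy1(1)]
    by auto
  moreover have "coprime (x1 * r) y1" using cusp_coprime[OF Q calculation] by simp
  ultimately show ?thesis using that xy1(2) unfolding L_def by blast
qed

lemma sum_cusp_weight_fibre_not_dvd:
  assumes M: "M > 0" and l: "Factorial_Ring.prime l" and Q: "Q \<in> cusps M" and xy: "(x, y) \<in> Q"
    and nG: "\<not> int l dvd gcd y (int M)"
  shows "(\<Sum>P\<in>beta_fibre l M Q. cusp_weight l M A t P) = t"
proof -
  obtain z y1 where mQ: "(int l * z, y1) \<in> Q" and ny1: "\<not> int l dvd y1" and cz: "coprime z y1"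
    using cusp_has_rep_mult_prime[OF l Q xy nG] .
  define P0 where "P0 = gamma0_rel (M * l) `` {(z, y1)}"
  have P0c: "P0 \<in> cusps (M * l)" and P0m: "(z, y1) \<in> P0"
    unfolding P0_def using class_in_cusps[OF cz] in_own_class[OF cz] by auto
  have "beta_cusp l M P0 = Q"
    unfolding P0_def beta_cusp_class[OF l cz] beta_rep_not_dvd[OF ny1] using cusp_eq_class[OF Q mQ] by simp
  then have P0F: "P0 \<in> beta_fibre l M Q" unfolding beta_fibre_def using P0c by simp
  have "\<not> int l dvd gcd y1 (int (M * l))" using ny1 by (meson dvd_trans gcd_dvd1)
  then have wP0: "cusp_weight l M A t P0 = t"
    unfolding cusp_weight_eq[OF P0c P0m] fibre_weight_def by simp
  have wz: "cusp_weight l M A t P = 0" if PF: "P \<in> beta_fibre l M Q" and ne: "P \<noteq> P0" for P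
  proof -
    have Pc: "P \<in> cusps (M * l)" and bP: "beta_cusp l M P = Q" using PF unfolding beta_fibre_def by auto
    obtain x' y' where m': "(x', y') \<in> P" using cusp_nonempty[OF Pc] by auto
    have lQ: "beta_rep l x' y' \<in> Q" using beta_rep_in_beta_cusp[OF l Pc m'] bP by simp
    show ?thesis
    proof (cases "int l dvd y'")
      case False
      have "((int l * z, y1), (int l * x', y')) \<in> gamma0_rel M"
        using cusp_gamma0_rel[OF Q mQ] lQ beta_rep_not_dvd[OF False] by simp
      then have "P0 = P"
        using cusps_eqI[OF P0c Pc P0m m'] gamma0_rel_raise_level_not_dvd[OF l cz ny1] by blast
      then show ?thesis using ne by simp
    next
      case True
      have "(x', y' div int l) \<in> Q" using lQ beta_rep_dvd[OF True] by simp
      then have "gcd (y' div int l) (int M) = gcd y1 (int M)"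
        using gamma0_rel_gcd_eq cusp_gamma0_rel[OF Q mQ] by blast
      moreover have "\<not> int l dvd gcd y1 (int M)" using ny1 by (meson dvd_trans gcd_dvd1)
      ultimately show ?thesis
        unfolding cusp_weight_eq[OF Pc m'] gcd_mult_level[OF l True] using fibre_weight_mult_not_dvd[OF l] by simp
    qed
  qed
  have "(\<Sum>P\<in>beta_fibre l M Q. cusp_weight l M A t P) = (\<Sum>P\<in>beta_fibre l M Q. if P = P0 then t else 0)"
    using wP0 wz by (intro sum.cong) auto
  also have "\<dots> = t" using P0F finite_beta_fibre[OF M l] by simp
  finally show ?thesis .
qed

lemma beta_fibre_rep_dvd:
  assumes l: "Factorial_Ring.prime l" and Q: "Q \<in> cusps M" and xy: "(x, y) \<in> Q"
    and LG: "int l dvd gcd y (int M)" and PF: "P \<in> beta_fibre l M Q" and m': "(x', y') \<in> P"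
  shows "int l dvd y'" "((x, y), (x', y' div int l)) \<in> gamma0_rel M"
proof -
  have Pc: "P \<in> cusps (M * l)" and bP: "beta_cusp l M P = Q" using PF unfolding beta_fibre_def by auto
  have lQ: "beta_rep l x' y' \<in> Q" using beta_rep_in_beta_cusp[OF l Pc m'] bP by simp
  show Ly: "int l dvd y'"
  proof (rule ccontr)
    assume nd: "\<not> int l dvd y'"
    have "(int l * x', y') \<in> Q" using lQ beta_rep_not_dvd[OF nd] by simp
    then have "gcd y' (int M) = gcd y (int M)" using gamma0_rel_gcd_eq cusp_gamma0_rel[OF Q xy] by blast
    then show False using LG nd by (metis dvd_trans gcd_dvd1)
  qed
  have "(x', y' div int l) \<in> Q" using lQ beta_rep_dvd[OF Ly] by simp
  then show "((x, y), (x', y' div int l)) \<in> gamma0_rel M" using cusp_gamma0_rel[OF Q xy] by blast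
qed

lemma cusp_weight_beta_fibre_dvd:
  assumes l: "Factorial_Ring.prime l" and Q: "Q \<in> cusps M" and xy: "(x, y) \<in> Q"
    and LG: "int l dvd gcd y (int M)" and PF: "P \<in> beta_fibre l M Q"
  shows "cusp_weight l M A t P = fibre_weight l A t (int l * gcd y (int M))"
proof -
  have Pc: "P \<in> cusps (M * l)" using PF unfolding beta_fibre_def by simp
  then obtain x' y' where m': "(x', y') \<in> P" using cusp_nonempty by fastforce
  note r = beta_fibre_rep_dvd[OF l Q xy LG PF m']
  show ?thesis unfolding cusp_weight_eq[OF Pc m'] gcd_mult_level[OF l r(1)] gamma0_rel_gcd_eq[OF r(2)] ..
qed

lemma beta_fibre_eq_singleton:
  assumes l: "Factorial_Ring.prime l" and Q: "Q \<in> cusps M" and xy: "(x, y) \<in> Q"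
    and LG: "int l dvd gcd y (int M)" and good: "int l ^ A dvd (gcd y (int M)) ^ 2"
    and LA: "l ^ A dvd M" and nA: "\<not> l ^ (A + 1) dvd M"
  shows "beta_fibre l M Q = {gamma0_rel (M * l) `` {(x, int l * y)}}"
proof -
  define L where "L = int l"
  have lp: "Factorial_Ring.prime L" and lpos: "L > 0" unfolding L_def using l prime_gt_0_nat by simp_all
  have cxy: "coprime x y" using cusp_coprime[OF Q xy] .
  have Ly: "L dvd y" and LM: "L dvd int M" using LG unfolding L_def by (meson dvd_trans gcd_dvd1 gcd_dvd2)+
  have "gcd y (int M) ^ 2 dvd y ^ 2" by (simp add: power2_eq_square mult_dvd_mono)
  then have Ay: "L ^ A dvd y ^ 2" using good unfolding L_def by (meson dvd_trans)
  define m where "m = int (M div l ^ A)"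
  have Mm: "int M = L ^ A * m" unfolding m_def L_def using LA by (metis dvd_mult_div_cancel of_nat_mult of_nat_power)
  have "\<not> L dvd m"
  proof
    assume "L dvd m"
    then have "int (l ^ (A + 1)) dvd int M" unfolding Mm L_def by (simp add: mult.commute)
    then show False using nA by (simp only: of_nat_dvd_iff)
  qed
  then have cm: "coprime m L" using prime_imp_coprime[OF lp] by (metis coprime_commute)
  have cp1: "coprime x (L * y)" using coprime_translate_mult[OF cxy Ly, of 0] by simp
  define P1 where "P1 = gamma0_rel (M * l) `` {(x, L * y)}"
  have P1c: "P1 \<in> cusps (M * l)" and P1m: "(x, L * y) \<in> P1"
    unfolding P1_def using class_in_cusps[OF cp1] in_own_class[OF cp1] by auto
  have "beta_cusp l M P1 = gamma0_rel M `` {(x, y)}"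
    unfolding P1_def L_def beta_cusp_class[OF l cp1[unfolded L_def]] beta_rep_dvd[OF dvd_triv_left]
    using lpos unfolding L_def by simp
  then have P1F: "P1 \<in> beta_fibre l M Q" unfolding beta_fibre_def using P1c cusp_eq_class[OF Q xy] by simp
  have "P = P1" if PF: "P \<in> beta_fibre l M Q" for P
  proof -
    have Pc: "P \<in> cusps (M * l)" using PF unfolding beta_fibre_def by auto
    obtain x' y' where m': "(x', y') \<in> P" using cusp_nonempty[OF Pc] by auto
    note c = beta_fibre_rep_dvd[OF l Q xy LG PF m']
    have "((x, L * y), (x', L * (y' div L))) \<in> gamma0_rel (M * l)"
      using gamma0_rel_raise_level_dvd[OF l cxy Ly[unfolded L_def] Ay[unfolded L_def] Mm[unfolded L_def]
          cm[unfolded L_def] LM[unfolded L_def] c(2)]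
      unfolding L_def by simp
    moreover have "L * (y' div L) = y'" using c(1) unfolding L_def by simp
    ultimately show "P = P1" using cusps_eqI[OF P1c Pc P1m m'] by simp
  qed
  then show ?thesis using P1F unfolding P1_def L_def by blast
qed

lemma beta_fibre_eq_translates:
  assumes l: "Factorial_Ring.prime l" and Q: "Q \<in> cusps M" and xy: "(x, y) \<in> Q"
    and LG: "int l dvd gcd y (int M)"
  shows "beta_fibre l M Q = (\<lambda>b. gamma0_rel (M * l) `` {(x + b * y, int l * y)}) ` {0..<int l}"
proof -
  define f where "f = (\<lambda>b. gamma0_rel (M * l) `` {(x + b * y, int l * y)})"
  have cxy: "coprime x y" using cusp_coprime[OF Q xy] .
  have Ly: "int l dvd y" and LM: "int l dvd int M" using LG by (meson dvd_trans gcd_dvd1 gcd_dvd2)+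
  have cpb: "coprime (x + b * y) (int l * y)" for b using coprime_translate_mult[OF cxy Ly] .
  have "P \<in> f ` {0..<int l}" if PF: "P \<in> beta_fibre l M Q" for P
  proof -
    have Pc: "P \<in> cusps (M * l)" using PF unfolding beta_fibre_def by auto
    obtain x' y' where m': "(x', y') \<in> P" using cusp_nonempty[OF Pc] by auto
    note c = beta_fibre_rep_dvd[OF l Q xy LG PF m']
    obtain b where b: "b \<in> {0..<int l}" "((x + b * y, int l * y), (x', int l * (y' div int l))) \<in> gamma0_rel (M * l)"
      using gamma0_rel_raise_level_translate[OF l cxy Ly LM c(2)] by blast
    then have "f b = P"
      using c(1) cusps_eqI[OF class_in_cusps[OF cpb] Pc in_own_class[OF cpb] m'] unfolding f_def by simp
    then show ?thesis using b(1) by blast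
  qed
  moreover have "f b \<in> beta_fibre l M Q" for b
  proof -
    have "int l > 0" using l prime_gt_0_nat by simp
    then have "beta_cusp l M (f b) = gamma0_rel M `` {(x + b * y, y)}"
      unfolding f_def beta_cusp_class[OF l cpb] beta_rep_dvd[OF dvd_triv_left] by simp
    also have "\<dots> = Q"
      using gamma0_rel_translate[OF cxy] cusp_eq_class[OF Q xy] equiv_class_eq[OF equiv_gamma0_rel] by metis
    finally show ?thesis unfolding beta_fibre_def f_def using class_in_cusps[OF cpb] by simp
  qed
  ultimately show ?thesis unfolding f_def by blast
qed

lemma inj_on_translates:
  assumes M: "M > 0" and l: "Factorial_Ring.prime l" and cxy: "coprime x y" and ly: "int l dvd y"
    and LA: "l ^ A dvd M" and bad: "\<not> int l ^ A dvd (gcd y (int M)) ^ 2"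
  shows "inj_on (\<lambda>b. gamma0_rel (M * l) `` {(x + b * y, int l * y)}) {0..<int l}"
proof (rule inj_onI)
  have LA': "int l ^ A dvd int M" using LA by (metis of_nat_dvd_iff of_nat_power)
  have "y \<noteq> 0"
  proof
    assume "y = 0"
    then have "int l ^ A dvd (gcd y (int M)) ^ 2" using LA' by (simp add: power2_eq_square)
    then show False using bad by simp
  qed
  then obtain j y0 G0 where d: "y = int l ^ j * y0" "\<not> int l dvd y0" "gcd y (int M) = int l ^ j * G0"
    "int l ^ (2 * j + 1) * G0 dvd int M"
    using power_dvd_gcd_square_decompose[OF l _ M LA' bad] by blast
  have cpb: "coprime (x + b * y) (int l * y)" for b using coprime_translate_mult[OF cxy ly] .
  fix b b' assume b: "b \<in> {0..<int l}" and b': "b' \<in> {0..<int l}"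
    and "gamma0_rel (M * l) `` {(x + b * y, int l * y)} = gamma0_rel (M * l) `` {(x + b' * y, int l * y)}"
  then have "((x + b * y, int l * y), (x + b' * y, int l * y)) \<in> gamma0_rel (M * l)"
    using class_eq_iff[OF cpb cpb] by blast
  then show "b = b'" by (rule gamma0_rel_translates_eq[OF l M d b b'])
qed

lemma sum_cusp_weight_fibre:
  assumes M: "M > 0" and l: "Factorial_Ring.prime l" and Q: "Q \<in> cusps M"
    and LA: "l ^ A dvd M" and nA: "\<not> l ^ (A + 1) dvd M" and ht: "t = int l \<or> A \<le> 2"
  shows "(\<Sum>P\<in>beta_fibre l M Q. cusp_weight l M A t P) = t"
proof -
  obtain x y where xy: "(x, y) \<in> Q" using cusp_nonempty[OF Q] by auto
  define G where "G = gcd y (int M)"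
  consider "\<not> int l dvd G" | "int l dvd G" "int l ^ A dvd G ^ 2" | "int l dvd G" "\<not> int l ^ A dvd G ^ 2"
    by blast
  then show ?thesis
  proof cases
    case 1
    then show ?thesis using sum_cusp_weight_fibre_not_dvd[OF M l Q xy] unfolding G_def by blast
  next
    case 2
    define P1 where "P1 = gamma0_rel (M * l) `` {(x, int l * y)}"
    have F: "beta_fibre l M Q = {P1}"
      using beta_fibre_eq_singleton[OF l Q xy 2[unfolded G_def] LA nA] unfolding P1_def .
    then have "cusp_weight l M A t P1 = t"
      using cusp_weight_beta_fibre_dvd[OF l Q xy 2(1)[unfolded G_def]] fibre_weight_mult_dvd[OF l 2(1)] 2(2)
      unfolding G_def by simp
    then show ?thesis unfolding F by simp
  next
    case 3
    have "t = int l"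
    proof (rule ccontr)
      assume "t \<noteq> int l"
      then have "int l ^ A dvd int l ^ 2" using ht by (simp add: le_imp_power_dvd)
      moreover have "int l ^ 2 dvd G ^ 2" using 3(1) by (simp add: power2_eq_square mult_dvd_mono)
      ultimately show False using 3(2) by (meson dvd_trans)
    qed
    have "cusp_weight l M A t P = 1" if "P \<in> beta_fibre l M Q" for P
      using cusp_weight_beta_fibre_dvd[OF l Q xy 3(1)[unfolded G_def] that] fibre_weight_mult_dvd[OF l 3(1)] 3(2)
      unfolding G_def by simp
    then have "(\<Sum>P\<in>beta_fibre l M Q. cusp_weight l M A t P) = int (card (beta_fibre l M Q))" by simp
    also have "card (beta_fibre l M Q) = card {0..<int l}"
    proof -
      have ly: "int l dvd y" using 3(1) unfolding G_def by (meson dvd_trans gcd_dvd1)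
      show ?thesis
        unfolding beta_fibre_eq_translates[OF l Q xy 3(1)[unfolded G_def]]
        by (rule card_image[OF inj_on_translates[OF M l cusp_coprime[OF Q xy] ly LA 3(2)[unfolded G_def]]])
    qed
    finally show ?thesis using \<open>t = int l\<close> by simp
  qed
qed

section \<open>Weighted pull-backs\<close>

definition weighted_pullback ::
    "nat \<Rightarrow> nat \<Rightarrow> nat \<Rightarrow> int \<Rightarrow> ((int \<times> int) set \<Rightarrow> int) \<Rightarrow> (int \<times> int) set \<Rightarrow> int" where
  "weighted_pullback l M A t D P =
     (if P \<in> cusps (M * l) then D (beta_cusp l M P) * cusp_weight l M A t P else 0)"

lemma sum_weighted_pullback_fibre:
  assumes M: "M > 0" and l: "Factorial_Ring.prime l" and Q: "Q \<in> cusps M"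
    and LA: "l ^ A dvd M" and nA: "\<not> l ^ (A + 1) dvd M" and ht: "t = int l \<or> A \<le> 2"
  shows "(\<Sum>P\<in>beta_fibre l M Q. weighted_pullback l M A t D P) = t * D Q"
proof -
  have "(\<Sum>P\<in>beta_fibre l M Q. weighted_pullback l M A t D P)
      = (\<Sum>P\<in>beta_fibre l M Q. D Q * cusp_weight l M A t P)"
    unfolding weighted_pullback_def beta_fibre_def by (rule sum.cong) auto
  also have "\<dots> = D Q * t" using sum_cusp_weight_fibre[OF M l Q LA nA ht] by (simp flip: sum_distrib_left)
  finally show ?thesis by simp
qed

lemma beta_push_weighted_pullback:
  assumes M: "M > 0" and l: "Factorial_Ring.prime l" and D: "D \<in> rat_cusp_div0 M"
    and LA: "l ^ A dvd M" and nA: "\<not> l ^ (A + 1) dvd M" and ht: "t = int l \<or> A \<le> 2"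
  shows "beta_push l M (weighted_pullback l M A t D) = (\<lambda>Q. t * D Q)"
proof
  fix Q show "beta_push l M (weighted_pullback l M A t D) Q = t * D Q"
  proof (cases "Q \<in> cusps M")
    case True
    then show ?thesis using beta_push_eq_sum_fibre sum_weighted_pullback_fibre[OF M l True LA nA ht] by simp
  next
    case False
    then show ?thesis using D unfolding beta_push_def rat_cusp_div0_def by simp
  qed
qed

lemma weighted_pullback_in_rat_cusp_div0:
  assumes M: "M > 0" and l: "Factorial_Ring.prime l" and D: "D \<in> rat_cusp_div0 M"
    and LA: "l ^ A dvd M" and nA: "\<not> l ^ (A + 1) dvd M" and ht: "t = int l \<or> A \<le> 2"
  shows "weighted_pullback l M A t D \<in> rat_cusp_div0 (M * l)"
  unfolding rat_cusp_div0_def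
proof (intro CollectI conjI allI impI ballI)
  fix P assume "P \<notin> cusps (M * l)"
  then show "weighted_pullback l M A t D P = 0" unfolding weighted_pullback_def by simp
next
  have "(\<Sum>P\<in>cusps (M * l). weighted_pullback l M A t D P)
      = (\<Sum>Q\<in>cusps M. beta_push l M (weighted_pullback l M A t D) Q)"
    using sum_beta_push[OF M l] by simp
  also have "\<dots> = t * (\<Sum>Q\<in>cusps M. D Q)"
    unfolding beta_push_weighted_pullback[OF M l D LA nA ht] by (simp add: sum_distrib_left)
  finally show "(\<Sum>P\<in>cusps (M * l). weighted_pullback l M A t D P) = 0"
    using D unfolding rat_cusp_div0_def by simp
next
  fix u P P' assume u: "coprime u (int (M * l))" and P: "P \<in> cusps (M * l)" and P': "P' \<in> cusps (M * l)"
    and g: "galois_rel (M * l) u P P'"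
  have "D (beta_cusp l M P) = D (beta_cusp l M P')"
    using rat_cusp_div0_galois_rel[OF D _ beta_cusp_in_cusps[OF l P'] beta_cusp_galois_rel[OF l P P' g]
        beta_cusp_in_cusps[OF l P]] u by simp
  moreover obtain x y x' where "(x, y) \<in> P" "(x', y) \<in> P'"
    using g unfolding galois_rel_def by blast
  then have "cusp_weight l M A t P = cusp_weight l M A t P'"
    using cusp_weight_eq[OF P] cusp_weight_eq[OF P'] by simp
  ultimately show "weighted_pullback l M A t D P = weighted_pullback l M A t D P'"
    unfolding weighted_pullback_def using P P' by simp
qed

lemma smult_prime_in_beta_push_image:
  assumes M: "M > 0" and l: "Factorial_Ring.prime l" and D: "D \<in> rat_cusp_div0 M"
  shows "(\<lambda>Q. int l * D Q) \<in> beta_push l M ` rat_cusp_div0 (M * l)"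
  using beta_push_weighted_pullback[OF M l D power_multiplicity_exact[OF M l]]
    weighted_pullback_in_rat_cusp_div0[OF M l D power_multiplicity_exact[OF M l]]
  by (metis image_eqI)

lemma beta_push_image_eq:
  assumes M: "M > 0" and l: "Factorial_Ring.prime l" and n4: "\<not> l ^ 4 dvd M * l"
  shows "beta_push l M ` rat_cusp_div0 (M * l) = rat_cusp_div0 M"
proof
  show "beta_push l M ` rat_cusp_div0 (M * l) \<subseteq> rat_cusp_div0 M"
    using beta_push_in_rat_cusp_div0[OF M l] by blast
  have "multiplicity l M \<le> 2"
  proof (rule ccontr)
    assume "\<not> multiplicity l M \<le> 2"
    then have "l ^ 3 * l dvd M * l" using multiplicity_dvd'[of 3 l M] by (simp add: mult_dvd_mono)
    then show False using n4 by (simp add: power_Suc2[symmetric] numeral_eq_Suc)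
  qed
  then have A: "1 = int l \<or> multiplicity l M \<le> 2" by simp
  show "rat_cusp_div0 M \<subseteq> beta_push l M ` rat_cusp_div0 (M * l)"
  proof
    fix D assume D: "D \<in> rat_cusp_div0 M"
    have "beta_push l M (weighted_pullback l M (multiplicity l M) 1 D) = D"
      using beta_push_weighted_pullback[OF M l D power_multiplicity_exact[OF M l] A] by simp
    then show "D \<in> beta_push l M ` rat_cusp_div0 (M * l)"
      using weighted_pullback_in_rat_cusp_div0[OF M l D power_multiplicity_exact[OF M l] A] by (metis image_eqI)
  qed
qed

section \<open>The cokernel of the push-forward\<close>

lemma div0_group_simps [simp]:
  "carrier (div0_group M) = rat_cusp_div0 M"
  "x \<otimes>\<^bsub>div0_group M\<^esub> y = (\<lambda>P. x P + y P)"
  "\<one>\<^bsub>div0_group M\<^esub> = (\<lambda>_. 0)"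
  unfolding div0_group_def by simp_all

lemma zero_in_rat_cusp_div0: "(\<lambda>_. 0) \<in> rat_cusp_div0 M"
  unfolding rat_cusp_div0_def by simp

lemma rat_cusp_div0_lincomb:
  "D \<in> rat_cusp_div0 M \<Longrightarrow> E \<in> rat_cusp_div0 M \<Longrightarrow> (\<lambda>P. a * D P + b * E P) \<in> rat_cusp_div0 M"
  unfolding rat_cusp_div0_def by (auto simp: sum.distrib simp flip: sum_distrib_left)

lemma rat_cusp_div0_div:
  assumes D: "D \<in> rat_cusp_div0 M" and dvd: "\<And>P. n dvd D P"
  shows "(\<lambda>P. D P div n) \<in> rat_cusp_div0 M"
proof (cases "n = 0")
  case True
  then show ?thesis unfolding rat_cusp_div0_def by simp
next
  case False
  have "n * (\<Sum>P\<in>cusps M. D P div n) = (\<Sum>P\<in>cusps M. D P)"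
    using dvd by (simp add: sum_distrib_left)
  then show ?thesis using D False unfolding rat_cusp_div0_def by auto
qed

lemma comm_group_div0_group: "comm_group (div0_group M)"
proof (rule comm_groupI)
  fix x assume "x \<in> carrier (div0_group M)"
  then show "\<exists>y\<in>carrier (div0_group M). y \<otimes>\<^bsub>div0_group M\<^esub> x = \<one>\<^bsub>div0_group M\<^esub>"
    using rat_cusp_div0_lincomb[of x M x "-1" 0] by (intro bexI[of _ "\<lambda>P. - x P"]) auto
qed (auto simp: algebra_simps intro: rat_cusp_div0_lincomb[of _ _ _ 1 1, simplified]
  simp: rat_cusp_div0_def)

interpretation div0: comm_group "div0_group M"
  by (rule comm_group_div0_group)

lemma div0_group_inv: "D \<in> rat_cusp_div0 M \<Longrightarrow> inv\<^bsub>div0_group M\<^esub> D = (\<lambda>P. - D P)"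
  using rat_cusp_div0_lincomb[of D M D "-1" 0] by (intro div0.inv_equality) auto

lemma div0_group_pow: "D \<in> rat_cusp_div0 M \<Longrightarrow> D [^]\<^bsub>div0_group M\<^esub> (n::nat) = (\<lambda>P. int n * D P)"
  by (induction n) (simp_all add: algebra_simps)

lemma subgroup_beta_push_image:
  assumes M: "M > 0" and l: "Factorial_Ring.prime l"
  shows "subgroup (beta_push l M ` rat_cusp_div0 (M * l)) (div0_group M)"
proof (rule div0.subgroupI)
  show "beta_push l M ` rat_cusp_div0 (M * l) \<subseteq> carrier (div0_group M)"
    using beta_push_in_rat_cusp_div0[OF M l] by auto
  show "beta_push l M ` rat_cusp_div0 (M * l) \<noteq> {}"
    using zero_in_rat_cusp_div0 by blast
next
  fix D assume "D \<in> beta_push l M ` rat_cusp_div0 (M * l)"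
  then obtain E where E: "E \<in> rat_cusp_div0 (M * l)" "D = beta_push l M E" by blast
  then have "inv\<^bsub>div0_group M\<^esub> D = beta_push l M (\<lambda>P. - E P)"
    using div0_group_inv beta_push_in_rat_cusp_div0[OF M l E(1)] beta_push_uminus by simp
  moreover have "(\<lambda>P. - E P) \<in> rat_cusp_div0 (M * l)"
    using rat_cusp_div0_lincomb[OF E(1) E(1), of "-1" 0] by simp
  ultimately show "inv\<^bsub>div0_group M\<^esub> D \<in> beta_push l M ` rat_cusp_div0 (M * l)" by simp
next
  fix D D' assume "D \<in> beta_push l M ` rat_cusp_div0 (M * l)" "D' \<in> beta_push l M ` rat_cusp_div0 (M * l)"
  then obtain E E' where "E \<in> rat_cusp_div0 (M * l)" "D = beta_push l M E"
    "E' \<in> rat_cusp_div0 (M * l)" "D' = beta_push l M E'" by blast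
  then show "D \<otimes>\<^bsub>div0_group M\<^esub> D' \<in> beta_push l M ` rat_cusp_div0 (M * l)"
    using rat_cusp_div0_lincomb[of E "M * l" E' 1 1] beta_push_add by (simp add: image_iff) metis
qed

lemma rcos_beta_push_image_eq:
  assumes M: "M > 0" and l: "Factorial_Ring.prime l"
    and x: "x \<in> rat_cusp_div0 M" and y: "y \<in> rat_cusp_div0 M"
    and cong: "\<And>P. P \<in> cusps M \<Longrightarrow> [x P = y P] (mod int l)"
  shows "beta_push l M ` rat_cusp_div0 (M * l) #>\<^bsub>div0_group M\<^esub> x
       = beta_push l M ` rat_cusp_div0 (M * l) #>\<^bsub>div0_group M\<^esub> y"
proof -
  let ?H = "beta_push l M ` rat_cusp_div0 (M * l)"
  have sg: "subgroup ?H (div0_group M)" using subgroup_beta_push_image[OF M l] .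
  define D where "D = (\<lambda>P. x P - y P)"
  have D: "D \<in> rat_cusp_div0 M" unfolding D_def using rat_cusp_div0_lincomb[OF x y, of 1 "-1"] by simp
  have "int l dvd D P" for P
    using cong[of P] x y unfolding D_def rat_cusp_div0_def by (cases "P \<in> cusps M") (auto simp: cong_iff_dvd_diff cong_sym_eq)
  then have "(\<lambda>P. int l * (D P div int l)) \<in> ?H"
    using smult_prime_in_beta_push_image[OF M l rat_cusp_div0_div[OF D]] by blast
  moreover have "(\<lambda>P. int l * (D P div int l)) = x \<otimes>\<^bsub>div0_group M\<^esub> inv\<^bsub>div0_group M\<^esub> y"
    using \<open>\<And>P. int l dvd D P\<close> div0_group_inv[OF y] unfolding D_def by auto
  ultimately have "?H #>\<^bsub>div0_group M\<^esub> (x \<otimes>\<^bsub>div0_group M\<^esub> inv\<^bsub>div0_group M\<^esub> y) = ?H"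
    using subgroup.rcos_const[OF sg div0.is_group] by simp
  then show ?thesis using div0.coset_mult_inv1 x y subgroup.subset[OF sg] by simp
qed

lemma finite_quotient:
  assumes M: "M > 0" and l: "Factorial_Ring.prime l"
  shows "finite (carrier (div0_group M Mod beta_push l M ` rat_cusp_div0 (M * l)))"
proof -
  define rho where "rho x = restrict (\<lambda>P. x P mod int l) (cusps M)" for x :: "(int \<times> int) set \<Rightarrow> int"
  have "rho ` rat_cusp_div0 M \<subseteq> (\<Pi>\<^sub>E P\<in>cusps M. {0..<int l})"
    unfolding rho_def using l prime_gt_0_nat by (auto simp: PiE_iff)
  then have "finite (rho ` rat_cusp_div0 M)"
    using finite_cusps[OF M] by (rule finite_subset[OF _ finite_PiE]) auto
  then show ?thesis
    unfolding carrier_FactGroup div0_group_simps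
  proof (rule finite_image_if_factors)
    fix x y assume "x \<in> rat_cusp_div0 M" "y \<in> rat_cusp_div0 M" "rho x = rho y"
    then show "beta_push l M ` rat_cusp_div0 (M * l) #>\<^bsub>div0_group M\<^esub> x
        = beta_push l M ` rat_cusp_div0 (M * l) #>\<^bsub>div0_group M\<^esub> y"
      using rcos_beta_push_image_eq[OF M l] unfolding rho_def cong_def by (metis restrict_apply')
  qed
qed

lemma prime_exponent_group_quotient:
  assumes M: "M > 0" and l: "Factorial_Ring.prime l"
  shows "prime_exponent_group (div0_group M Mod beta_push l M ` rat_cusp_div0 (M * l)) l"
proof -
  let ?H = "beta_push l M ` rat_cusp_div0 (M * l)"
  have sg: "subgroup ?H (div0_group M)" using subgroup_beta_push_image[OF M l] .
  then have nm: "?H \<lhd> div0_group M" by (rule div0.subgroup_imp_normal)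
  have "C [^]\<^bsub>div0_group M Mod ?H\<^esub> l = \<one>\<^bsub>div0_group M Mod ?H\<^esub>"
    if C: "C \<in> carrier (div0_group M Mod ?H)" for C
  proof -
    obtain x where x: "x \<in> rat_cusp_div0 M" "C = ?H #>\<^bsub>div0_group M\<^esub> x"
      using C unfolding carrier_FactGroup by auto
    have "C [^]\<^bsub>div0_group M Mod ?H\<^esub> l = ?H #>\<^bsub>div0_group M\<^esub> (x [^]\<^bsub>div0_group M\<^esub> l)"
      using hom_nat_pow[OF normal.r_coset_hom_Mod[OF nm] _ div0.is_group normal.factorgroup_is_group[OF nm]] x
      by simp
    also have "\<dots> = ?H"
      using subgroup.rcos_const[OF sg div0.is_group smult_prime_in_beta_push_image[OF M l x(1)]]
      by (simp add: div0_group_pow[OF x(1)])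
    finally show ?thesis by simp
  qed
  then show ?thesis
    unfolding prime_exponent_group_def prime_exponent_group_axioms_def
    using div0.abelian_FactGroup[OF sg] l by blast
qed

theorem lemma3p4:
  fixes M l :: nat
  assumes "M \<ge> 1" and "Factorial_Ring.prime l"
  shows "\<exists>k::nat.
     div0_group M Mod (beta_push l M ` rat_cusp_div0 (M * l))
       \<cong> product_group {..<k} (\<lambda>_. integer_mod_group l)
     \<and> (\<not> l ^ 4 dvd M * l \<longrightarrow> k = 0 \<and> beta_push l M ` rat_cusp_div0 (M * l) = rat_cusp_div0 M)"
proof -
  have M: "M > 0" and l: "Factorial_Ring.prime l" using assms by simp_all
  note quotient = prime_exponent_group_quotient[OF M l]
  have "\<exists>k::nat. div0_group M Mod (beta_push l M ` rat_cusp_div0 (M * l))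
      \<cong> product_group {..<k} (\<lambda>_. integer_mod_group l)"
    by (rule prime_exponent_group.iso_product_integer_mod_group[OF quotient finite_quotient[OF M l]])
  then obtain k :: nat where iso: "div0_group M Mod (beta_push l M ` rat_cusp_div0 (M * l))
      \<cong> product_group {..<k} (\<lambda>_. integer_mod_group l)" ..
  moreover have "k = 0 \<and> beta_push l M ` rat_cusp_div0 (M * l) = rat_cusp_div0 M"
    if n4: "\<not> l ^ 4 dvd M * l"
  proof -
    have H: "beta_push l M ` rat_cusp_div0 (M * l) = rat_cusp_div0 M"
      by (rule beta_push_image_eq[OF M l n4])
    have "l ^ k = card (carrier (div0_group M Mod carrier (div0_group M)))"
      using iso_same_card[OF iso] prime_exponent_group.card_carrier_Zp[OF quotient] H by simp
    also have "\<dots> = 1" by (rule card_FactGroup_carrier[OF div0.is_group])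
    finally show ?thesis using H prime_gt_1_nat[OF l] by simp
  qed
  ultimately show ?thesis by blast
qed

end
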